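(* For each $d\ge1$ there exist positive reals $\delta_d,N_d,c_d$ such that for all $n\ge N_d$ and all $\mathbf x\in\mathbb{Z}_n^d\setminus\{\mathbf 0\}$ with $\|\mathbf x\|_2<\delta_d n$, $$\mathbb{E}(\eta_{\mathbf 0}-\eta_{\mathbf x})^2\ge c_d\,\psi_d(n,\|\mathbf x\|_2),$$ where for $r>0$: $\psi_1(n,r)=nr^2$, $\psi_2(n,r)=r^2\log(n/r)$, $\psi_3(n,r)=r$, $\psi_4(n,r)=\log(1+r)$, and $\psi_d(n,r)=1$ for $d\ge5$.
   Context: $\mathbb{Z}_n^d$ is the discrete torus (nearest-neighbour, mod $n$, degree $2d$), identified with $(\mathbb{Z}\cap(-n/2,n/2])^d\subset\mathbb{R}^d$, and $\|\cdot\|_2$ is the Euclidean norm under this identification. $(\eta_{\mathbf x})_{\mathbf x\in\mathbb{Z}_n^d}$ is the centred Gaussian vector with covariance $\mathbb{E}[\eta_{\mathbf x}\eta_{\mathbf y}]=(2d)^{-2}\sum_{\mathbf z}g(\mathbf z,\mathbf x)g(\mathbf z,\mathbf y)$, where $g(\mathbf x,\mathbf y)=n^{-d}\sum_{\mathbf z}g^{\mathbf z}(\mathbf x,\mathbf y)$ and $g^{\mathbf z}(\mathbf x,\mathbf y)$ is the expected number of visits to $\mathbf y$ by simple random walk started at $\mathbf x$ before hitting $\mathbf z$. *)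

theory Defs
  imports "HOL-Analysis.Analysis"
begin

text \<open>Vertices of the discrete torus Z_n^d: functions nat => int with coordinates
  in {0..n-1} for i < d and 0 for i >= d.\<close>
definition torus :: "nat \<Rightarrow> nat \<Rightarrow> (nat \<Rightarrow> int) set" where
  "torus n d = {x. \<forall>i. (i < d \<longrightarrow> 0 \<le> x i \<and> x i < int n) \<and> (d \<le> i \<longrightarrow> x i = 0)}"

definition torus_zero :: "nat \<Rightarrow> int" where
  "torus_zero = (\<lambda>_. 0)"

definition centred_rep :: "nat \<Rightarrow> int \<Rightarrow> int" where
  "centred_rep n a = (if 2 * a > int n then a - int n else a)"

definition torus_norm :: "nat \<Rightarrow> nat \<Rightarrow> (nat \<Rightarrow> int) \<Rightarrow> real" where
  "torus_norm n d x = sqrt (\<Sum>i<d. (real_of_int (centred_rep n (x i)))\<^sup>2)"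

definition tstep :: "nat \<Rightarrow> (nat \<Rightarrow> int) \<Rightarrow> nat \<Rightarrow> int \<Rightarrow> (nat \<Rightarrow> int)" where
  "tstep n x i s = x(i := (x i + s) mod int n)"

text \<open>killed_kernel n d z k x y = probability that simple random walk (degree 2d)
  started at x is at y at time k and has not visited z at times 0..k.\<close>
fun killed_kernel :: "nat \<Rightarrow> nat \<Rightarrow> (nat \<Rightarrow> int) \<Rightarrow> nat \<Rightarrow> (nat \<Rightarrow> int) \<Rightarrow> (nat \<Rightarrow> int) \<Rightarrow> real" where
  "killed_kernel n d z 0 x y = (if x = y \<and> x \<noteq> z then 1 else 0)"
| "killed_kernel n d z (Suc k) x y =
     (if x = z then 0 else
        (\<Sum>i<d. \<Sum>s\<in>{1::int, -1}. killed_kernel n d z k (tstep n x i s) y / (2 * real d)))"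

text \<open>g^z(x,y): expected number of visits to y before hitting z, starting from x.\<close>
definition green_killed :: "nat \<Rightarrow> nat \<Rightarrow> (nat \<Rightarrow> int) \<Rightarrow> (nat \<Rightarrow> int) \<Rightarrow> (nat \<Rightarrow> int) \<Rightarrow> real" where
  "green_killed n d z x y = (\<Sum>k. killed_kernel n d z k x y)"

definition green_avg :: "nat \<Rightarrow> nat \<Rightarrow> (nat \<Rightarrow> int) \<Rightarrow> (nat \<Rightarrow> int) \<Rightarrow> real" where
  "green_avg n d x y = (\<Sum>z\<in>torus n d. green_killed n d z x y) / real n ^ d"

definition eta_cov :: "nat \<Rightarrow> nat \<Rightarrow> (nat \<Rightarrow> int) \<Rightarrow> (nat \<Rightarrow> int) \<Rightarrow> real" where
  "eta_cov n d x y = (\<Sum>z\<in>torus n d. green_avg n d z x * green_avg n d z y) / (2 * real d)\<^sup>2"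

text \<open>E (eta_x - eta_y)^2 for the centred Gaussian vector with covariance eta_cov.\<close>
definition eta_incr_var :: "nat \<Rightarrow> nat \<Rightarrow> (nat \<Rightarrow> int) \<Rightarrow> (nat \<Rightarrow> int) \<Rightarrow> real" where
  "eta_incr_var n d x y = eta_cov n d x x + eta_cov n d y y - 2 * eta_cov n d x y"

definition psi :: "nat \<Rightarrow> real \<Rightarrow> real \<Rightarrow> real" where
  "psi d n r = (if d = 1 then n * r\<^sup>2
               else if d = 2 then r\<^sup>2 * ln (n / r)
               else if d = 3 then r
               else if d = 4 then ln (1 + r)
               else 1)"

end

theory Submission
  imports Defs
begin

text \<open>Let \<open>u = g(\<cdot>, 0) - g(\<cdot>, x)\<close> for the averaged Green function \<open>g\<close>. Then
  \<open>E(\<eta>\<^sub>0 - \<eta>\<^sub>x)\<^sup>2 = \<parallel>u\<parallel>\<^sup>2 / (2d)\<^sup>2\<close> and \<open>(I - P) u = \<delta>\<^sub>0 - \<delta>\<^sub>x\<close>, where \<open>P\<close> is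
  the transition operator of the walk (the Green function of the killed walk is finite because
  the walk hits any given point within \<open>dn\<close> steps with probability at least \<open>(2d)\<^bsup>-dn\<^esub>\<close>).
  Hence for every test function \<open>\<phi>\<close>,
  \<open>\<phi>(0) - \<phi>(x) = \<langle>u, (I - P) \<phi>\<rangle> \<le> \<parallel>u\<parallel> \<parallel>(I - P) \<phi>\<parallel>\<close>, and every choice of \<open>\<phi>\<close>
  yields a lower bound for the variance.

  The test functions are sums of smooth radial bumps, possibly multiplied by the linear
  function \<open>\<langle>x, \<cdot>\<rangle>\<close>, at scales growing by a factor 8. The Laplacians of the different
  scales live on disjoint annuli, so their energies add up while the increments
  \<open>\<phi>(0) - \<phi>(x)\<close> add coherently. A single bump of radius 1 gives the bound for \<open>d \<ge> 5\<close>,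
  one bump of radius \<open>|x|\<close> the bound for \<open>d = 3\<close>, the \<open>log |x|\<close> bumps of radius below
  \<open>|x|\<close> the bound for \<open>d = 4\<close>, and linear bumps of radius between \<open>|x|\<close> and \<open>n\<close> the
  bounds for \<open>d = 1, 2\<close>.\<close>

section \<open>The discrete torus\<close>

definition extend_zero :: "nat \<Rightarrow> (nat \<Rightarrow> int) \<Rightarrow> nat \<Rightarrow> int" where
  "extend_zero d g = (\<lambda>i. if i < d then g i else 0)"

lemma torus_eq_image: "torus n d = extend_zero d ` (PiE {..<d} (\<lambda>_. {0..<int n}))"
proof
  show "torus n d \<subseteq> extend_zero d ` (PiE {..<d} (\<lambda>_. {0..<int n}))"
  proof
    fix x assume x: "x \<in> torus n d"
    have "restrict x {..<d} \<in> PiE {..<d} (\<lambda>_. {0..<int n})"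
      using x by (auto simp: torus_def)
    moreover have "x = extend_zero d (restrict x {..<d})"
      using x by (auto simp: torus_def extend_zero_def fun_eq_iff)
    ultimately show "x \<in> extend_zero d ` (PiE {..<d} (\<lambda>_. {0..<int n}))" by blast
  qed
  show "extend_zero d ` (PiE {..<d} (\<lambda>_. {0..<int n})) \<subseteq> torus n d"
    by (auto simp: torus_def extend_zero_def PiE_def Pi_def)
qed

lemma inj_on_extend_zero: "inj_on (extend_zero d) (PiE {..<d} A)"
proof (rule inj_onI)
  fix f g assume f: "f \<in> PiE {..<d} A" and g: "g \<in> PiE {..<d} A"
    and eq: "extend_zero d f = extend_zero d g"
  show "f = g"
  proof (rule PiE_ext[OF f g])
    fix i assume "i \<in> {..<d}"
    then show "f i = g i" using fun_cong[OF eq, of i] by (simp add: extend_zero_def)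
  qed
qed

lemma finite_torus: "finite (torus n d)"
  by (simp add: torus_eq_image finite_PiE)

lemma card_torus: "card (torus n d) = n ^ d"
  by (simp add: torus_eq_image card_image[OF inj_on_extend_zero] card_PiE)

lemma torus_zero_in_torus: "n \<ge> 1 \<Longrightarrow> torus_zero \<in> torus n d"
  by (auto simp: torus_def torus_zero_def)

lemma tstep_in_torus: "x \<in> torus n d \<Longrightarrow> i < d \<Longrightarrow> n \<ge> 1 \<Longrightarrow> tstep n x i s \<in> torus n d"
  by (auto simp: torus_def tstep_def)

lemma tstep_tstep_uminus:
  assumes "x \<in> torus n d"
  shows "tstep n (tstep n x i s) i (- s) = x"
proof -
  have "((x i + s) mod int n + - s) mod int n = (x i + s + - s) mod int n"
    by (metis mod_add_left_eq)
  also have "\<dots> = x i"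
    using assms by (cases "i < d") (auto simp: torus_def)
  finally show ?thesis by (auto simp: tstep_def fun_eq_iff)
qed

lemma sum_torus_tstep:
  assumes "i < d" "n \<ge> 1"
  shows "(\<Sum>w\<in>torus n d. f (tstep n w i s)) = (\<Sum>w\<in>torus n d. f w)"
proof (rule sum.reindex_bij_witness[where i = "\<lambda>w. tstep n w i (- s)" and j = "\<lambda>w. tstep n w i s"])
  fix w assume w: "w \<in> torus n d"
  show "tstep n (tstep n w i s) i (- s) = w" by (rule tstep_tstep_uminus[OF w])
  show "tstep n (tstep n w i (- s)) i s = w" using tstep_tstep_uminus[OF w, of i "- s"] by simp
  show "tstep n w i s \<in> torus n d" "tstep n w i (- s) \<in> torus n d"
    using tstep_in_torus[OF w assms(1,2)] by blast+
qed simp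

section \<open>The random walk killed at a point\<close>

lemma killed_kernel_nonneg: "killed_kernel n d z k x y \<ge> 0"
  by (induction k arbitrary: x) (auto intro!: sum_nonneg divide_nonneg_nonneg)

text \<open>The probability that the walk started at \<open>x\<close> has not visited \<open>z\<close> at times \<open>0..k\<close>.\<close>

fun survival :: "nat \<Rightarrow> nat \<Rightarrow> (nat \<Rightarrow> int) \<Rightarrow> nat \<Rightarrow> (nat \<Rightarrow> int) \<Rightarrow> real" where
  "survival n d z 0 x = (if x = z then 0 else 1)"
| "survival n d z (Suc k) x = (if x = z then 0 else
      (\<Sum>i<d. \<Sum>s\<in>{1::int, -1}. survival n d z k (tstep n x i s) / (2 * real d)))"

lemma survival_le_one: "survival n d z k x \<le> 1"
proof (induction k arbitrary: x)
  case (Suc k)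
  have "(\<Sum>i<d. \<Sum>s\<in>{1::int, -1}. survival n d z k (tstep n x i s) / (2 * real d))
      \<le> (\<Sum>i<d. \<Sum>s\<in>{1::int, -1}. 1 / (2 * real d))"
    by (intro sum_mono divide_right_mono) (auto simp: Suc.IH)
  also have "\<dots> \<le> 1" by (cases "d = 0") auto
  finally show ?case by simp
qed simp

lemma killed_kernel_le_survival: "killed_kernel n d z k x y \<le> survival n d z k x"
  by (induction k arbitrary: x) (auto intro!: sum_mono add_mono divide_right_mono)

lemma survival_at_target [simp]: "survival n d z k z = 0"
  by (cases k) auto

lemma survival_add_le:
  assumes "\<forall>v\<in>torus n d. survival n d z a v \<le> c" "c \<ge> 0" "x \<in> torus n d" "n \<ge> 1"
  shows "survival n d z (b + a) x \<le> c * survival n d z b x"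
  using assms(3)
proof (induction b arbitrary: x)
  case 0
  then show ?case using assms(1) by (cases "x = z") auto
next
  case (Suc b)
  show ?case
  proof (cases "x = z")
    case False
    have "survival n d z (Suc b + a) x =
        (\<Sum>i<d. \<Sum>s\<in>{1::int, -1}. survival n d z (b + a) (tstep n x i s) / (2 * real d))"
      using False by simp
    also have "\<dots> \<le> (\<Sum>i<d. \<Sum>s\<in>{1::int, -1}. c * survival n d z b (tstep n x i s) / (2 * real d))"
      by (intro sum_mono divide_right_mono)
        (auto intro!: Suc.IH tstep_in_torus Suc.prems assms(4))
    also have "\<dots> = c * survival n d z (Suc b) x"
      using False by (simp add: sum_distrib_left algebra_simps)
    finally show ?thesis .
  qed simp
qed

lemma survival_Suc_le:
  assumes "x \<noteq> z" "i < d" "s \<in> {1, -1}"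
  shows "survival n d z (Suc k) x \<le> (survival n d z k (tstep n x i s) + (2 * real d - 1)) / (2 * real d)"
proof -
  let ?f = "\<lambda>j t. survival n d z k (tstep n x j t) / (2 * real d)"
  let ?P = "{..<d} \<times> {1::int, -1}"
  have card: "card (?P - {(i, s)}) = 2 * d - 1"
    using assms(2,3) by (simp add: card_cartesian_product)
  have "survival n d z (Suc k) x = (\<Sum>(j, t)\<in>?P. ?f j t)"
    by (simp only: survival.simps(2) assms(1) if_False sum.cartesian_product)
  also have "\<dots> = ?f i s + (\<Sum>(j, t)\<in>?P - {(i, s)}. ?f j t)"
    using assms(2,3) by (subst sum.remove[of _ "(i, s)"]) auto
  also have "\<dots> \<le> ?f i s + (\<Sum>(j, t)\<in>?P - {(i, s)}. 1 / (2 * real d))"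
    by (intro add_mono sum_mono) (auto intro!: divide_right_mono survival_le_one)
  also have "\<dots> = (survival n d z k (tstep n x i s) + (2 * real d - 1)) / (2 * real d)"
    using assms(2) card by (simp add: of_nat_diff add_divide_distrib)
  finally show ?thesis .
qed

text \<open>The number of \<open>-1\<close> steps that lead from \<open>x\<close> to \<open>z\<close>.\<close>

definition torus_dist :: "nat \<Rightarrow> nat \<Rightarrow> (nat \<Rightarrow> int) \<Rightarrow> (nat \<Rightarrow> int) \<Rightarrow> nat" where
  "torus_dist n d z x = (\<Sum>i<d. nat ((x i - z i) mod int n))"

lemma torus_dist_le:
  assumes "n \<ge> 1"
  shows "torus_dist n d z x \<le> d * n"
proof -
  have "torus_dist n d z x \<le> (\<Sum>i<d. n)"
    unfolding torus_dist_def
  proof (rule sum_mono)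
    fix i
    have "(x i - z i) mod int n < int n" using assms by simp
    then show "nat ((x i - z i) mod int n) \<le> n" by linarith
  qed
  then show ?thesis by simp
qed

lemma torus_coord_eqI:
  assumes "x \<in> torus n d" "z \<in> torus n d" "(x i - z i) mod int n = 0"
  shows "x i = z i"
proof (cases "i < d")
  case True
  have "x i mod int n = z i mod int n"
    using assms(3) by (simp add: mod_eq_dvd_iff dvd_eq_mod_eq_0)
  then show ?thesis using True assms(1,2) by (auto simp: torus_def)
next
  case False
  then show ?thesis using assms(1,2) by (auto simp: torus_def)
qed

lemma torus_dist_eq_0D:
  assumes "x \<in> torus n d" "z \<in> torus n d" "n \<ge> 1" "torus_dist n d z x = 0"
  shows "x = z"
proof
  fix i
  show "x i = z i"
  proof (cases "i < d")
    case True
    then have "nat ((x i - z i) mod int n) = 0"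
      using assms(4) unfolding torus_dist_def by (simp add: sum_nonneg_eq_0_iff)
    then have "(x i - z i) mod int n = 0" using assms(3) by (simp add: nat_eq_iff)
    then show ?thesis by (rule torus_coord_eqI[OF assms(1,2)])
  qed (use assms(1,2) in \<open>auto simp: torus_def\<close>)
qed

lemma torus_dist_tstep_down:
  assumes "x \<in> torus n d" "z \<in> torus n d" "n \<ge> 1" "x \<noteq> z"
  obtains i where "i < d" "torus_dist n d z (tstep n x i (-1)) + 1 = torus_dist n d z x"
proof -
  obtain i where xi: "x i \<noteq> z i" using assms(4) by auto
  have i: "i < d" using xi assms(1,2) by (cases "i < d") (auto simp: torus_def)
  let ?x' = "tstep n x i (-1)"
  have pos: "(x i - z i) mod int n \<noteq> 0" using torus_coord_eqI[OF assms(1,2)] xi by metis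
  have range: "0 \<le> (x i - z i) mod int n" "(x i - z i) mod int n < int n" using assms(3) by auto
  have "(?x' i - z i) mod int n = (x i - z i - 1) mod int n"
    by (simp add: tstep_def mod_diff_left_eq algebra_simps)
  also have "\<dots> = ((x i - z i) mod int n - 1) mod int n" by (simp add: mod_diff_left_eq)
  also have "\<dots> = (x i - z i) mod int n - 1" using pos range by (intro mod_pos_pos_trivial) auto
  finally have coord: "(?x' i - z i) mod int n = (x i - z i) mod int n - 1" .
  have others: "(\<Sum>j\<in>{..<d}-{i}. nat ((?x' j - z j) mod int n))
      = (\<Sum>j\<in>{..<d}-{i}. nat ((x j - z j) mod int n))"
    by (rule sum.cong) (auto simp: tstep_def)
  have "torus_dist n d z ?x' + 1 = torus_dist n d z x"
    unfolding torus_dist_def using i coord others pos range by (simp add: sum.remove)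
  then show ?thesis using i that by blast
qed

text \<open>From every point the target can be reached in at most \<open>k \<ge> torus_dist\<close> steps, each
  taken with probability \<open>1/(2d)\<close>.\<close>

lemma survival_le_if_torus_dist_le:
  assumes "z \<in> torus n d" "n \<ge> 1" "d \<ge> 1"
  shows "x \<in> torus n d \<Longrightarrow> torus_dist n d z x \<le> k \<Longrightarrow>
    survival n d z k x \<le> 1 - (1 / (2 * real d)) ^ k"
proof (induction k arbitrary: x)
  case 0
  then show ?case using torus_dist_eq_0D[OF _ assms(1,2)] by simp
next
  case (Suc k)
  show ?case
  proof (cases "x = z")
    case True
    have "(1 / (2 * real d)) ^ Suc k \<le> 1" using assms(3) by (intro power_le_one) auto
    then show ?thesis using True by simp
  next
    case False
    obtain i where i: "i < d" and dist: "torus_dist n d z (tstep n x i (-1)) + 1 = torus_dist n d z x"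
      using torus_dist_tstep_down[OF Suc.prems(1) assms(1,2) False] .
    have IH: "survival n d z k (tstep n x i (-1)) \<le> 1 - (1 / (2 * real d)) ^ k"
      using Suc.IH[OF tstep_in_torus[OF Suc.prems(1) i assms(2)]] dist Suc.prems(2) by simp
    have "survival n d z (Suc k) x \<le> (survival n d z k (tstep n x i (-1)) + (2 * real d - 1)) / (2 * real d)"
      by (rule survival_Suc_le[OF False i]) simp
    also have "\<dots> \<le> (1 - (1 / (2 * real d)) ^ k + (2 * real d - 1)) / (2 * real d)"
      using IH by (intro divide_right_mono) auto
    also have "\<dots> = 1 - (1 / (2 * real d)) ^ Suc k" using assms(3) by (simp add: field_simps)
    finally show ?thesis .
  qed
qed

lemma survival_geometric:
  assumes "z \<in> torus n d" "n \<ge> 1" "d \<ge> 1"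
  defines "q \<equiv> 1 - (1 / (2 * real d)) ^ (d * n)"
  shows "\<forall>v\<in>torus n d. survival n d z (k * (d * n)) v \<le> q ^ k"
proof (induction k)
  case 0
  then show ?case using survival_le_one by simp
next
  case (Suc k)
  have q: "q \<ge> 0" unfolding q_def using assms(3) by (simp add: power_le_one)
  have hit: "\<forall>v\<in>torus n d. survival n d z (d * n) v \<le> q"
    unfolding q_def using survival_le_if_torus_dist_le[OF assms(1-3)] torus_dist_le[OF assms(2)] by blast
  show ?case
  proof
    fix v assume v: "v \<in> torus n d"
    have "survival n d z (Suc k * (d * n)) v = survival n d z (k * (d * n) + d * n) v"
      by (simp add: add.commute)
    also have "\<dots> \<le> q * survival n d z (k * (d * n)) v" by (rule survival_add_le[OF hit q v assms(2)])
    also have "\<dots> \<le> q * q ^ k" using Suc v q by (intro mult_left_mono) auto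
    finally show "survival n d z (Suc k * (d * n)) v \<le> q ^ Suc k" by simp
  qed
qed

lemma summable_killed_kernel:
  assumes "z \<in> torus n d" "x \<in> torus n d" "n \<ge> 1" "d \<ge> 1"
  shows "summable (\<lambda>k. killed_kernel n d z k x y)"
proof -
  define m where "m = d * n"
  define q where "q = 1 - (1 / (2 * real d)) ^ m"
  have m: "m > 0" using assms by (simp add: m_def)
  have "0 < (1 / (2 * real d)) ^ m" "(1 / (2 * real d)) ^ m < 1"
    using assms(4) m by (auto simp: power_less_one_iff)
  then have q: "0 < q" "q < 1" by (auto simp: q_def)
  define \<rho> where "\<rho> = root m q"
  have \<rho>: "0 < \<rho>" "\<rho> < 1" "\<rho> ^ m = q" using q m by (auto simp: \<rho>_def real_root_pow_pos2)
  have bound: "killed_kernel n d z k x y \<le> \<rho> ^ k / q" for k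
  proof -
    have "killed_kernel n d z k x y \<le> survival n d z (k mod m + (k div m) * m) x"
      using killed_kernel_le_survival by simp
    also have "\<dots> \<le> q ^ (k div m) * survival n d z (k mod m) x"
      using survival_geometric[OF assms(1,3,4), of "k div m"] q
      by (intro survival_add_le[OF _ _ assms(2,3)]) (auto simp: m_def q_def)
    also have "\<dots> \<le> q ^ (k div m)"
      using survival_le_one q by (simp add: mult_left_le)
    also have "\<dots> \<le> \<rho> ^ k / q"
    proof -
      have "\<rho> ^ k = q ^ (k div m) * \<rho> ^ (k mod m)"
        by (metis \<rho>(3) div_mult_mod_eq mult.commute power_add power_mult)
      moreover have "q \<le> \<rho> ^ (k mod m)"
        using \<rho> m power_decreasing[of "k mod m" m \<rho>] by simp
      ultimately have "q ^ (k div m) * q \<le> \<rho> ^ k" using q by (simp add: mult_left_mono)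
      then show ?thesis using q by (simp add: field_simps)
    qed
    finally show ?thesis .
  qed
  have "summable (\<lambda>k. \<rho> ^ k / q)" using \<rho> by (intro summable_divide summable_geometric) auto
  then show ?thesis
    by (rule summable_comparison_test'[where N = 0]) (use bound killed_kernel_nonneg in auto)
qed

lemma green_killed_first_step:
  assumes "z \<in> torus n d" "x \<in> torus n d" "n \<ge> 1" "d \<ge> 1" "x \<noteq> z"
  shows "green_killed n d z x y = (if x = y then 1 else 0) +
     (\<Sum>i<d. \<Sum>s\<in>{1::int, -1}. green_killed n d z (tstep n x i s) y / (2 * real d))"
proof -
  have S: "summable (\<lambda>k. killed_kernel n d z k x y)" by (rule summable_killed_kernel[OF assms(1-4)])
  have S': "summable (\<lambda>k. killed_kernel n d z k (tstep n x i s) y)" if "i < d" for i s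
    by (rule summable_killed_kernel[OF assms(1) tstep_in_torus[OF assms(2) that assms(3)] assms(3,4)])
  have "green_killed n d z x y = killed_kernel n d z 0 x y + (\<Sum>k. killed_kernel n d z (Suc k) x y)"
    unfolding green_killed_def using suminf_split_head[OF S] by simp
  also have "(\<Sum>k. killed_kernel n d z (Suc k) x y) =
      (\<Sum>k. \<Sum>i<d. \<Sum>s\<in>{1::int, -1}. killed_kernel n d z k (tstep n x i s) y / (2 * real d))"
    using assms(5) by simp
  also have "\<dots> = (\<Sum>i<d. \<Sum>k. \<Sum>s\<in>{1::int, -1}. killed_kernel n d z k (tstep n x i s) y / (2 * real d))"
    by (rule suminf_sum) (auto intro!: summable_add summable_divide S')
  also have "\<dots> = (\<Sum>i<d. \<Sum>s\<in>{1::int, -1}. \<Sum>k. killed_kernel n d z k (tstep n x i s) y / (2 * real d))"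
    by (intro sum.cong refl suminf_sum) (auto intro!: summable_divide S')
  also have "\<dots> = (\<Sum>i<d. \<Sum>s\<in>{1::int, -1}. green_killed n d z (tstep n x i s) y / (2 * real d))"
    unfolding green_killed_def by (intro sum.cong refl) (auto simp: suminf_divide S')
  finally show ?thesis using assms(5) by simp
qed

section \<open>The variance as a dual norm\<close>

definition torus_lap :: "nat \<Rightarrow> nat \<Rightarrow> ((nat \<Rightarrow> int) \<Rightarrow> real) \<Rightarrow> (nat \<Rightarrow> int) \<Rightarrow> real" where
  "torus_lap n d f w = f w - (\<Sum>i<d. \<Sum>s\<in>{1::int, -1}. f (tstep n w i s)) / (2 * real d)"

lemma sum_neighbours_torus:
  assumes "n \<ge> 1"
  shows "(\<Sum>w\<in>torus n d. \<Sum>i<d. \<Sum>s\<in>{1::int, -1}. f (tstep n w i s)) = 2 * real d * (\<Sum>w\<in>torus n d. f w)"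
proof -
  have "(\<Sum>w\<in>torus n d. \<Sum>i<d. \<Sum>s\<in>{1::int, -1}. f (tstep n w i s))
      = (\<Sum>i<d. \<Sum>s\<in>{1::int, -1}. \<Sum>w\<in>torus n d. f (tstep n w i s))"
    by (simp add: sum.swap[of _ "torus n d"])
  also have "\<dots> = (\<Sum>i<d. \<Sum>s\<in>{1::int, -1}. \<Sum>w\<in>torus n d. f w)"
    using assms by (simp add: sum_torus_tstep)
  finally show ?thesis by simp
qed

lemma sum_torus_lap:
  assumes "n \<ge> 1" "d \<ge> 1"
  shows "(\<Sum>w\<in>torus n d. torus_lap n d f w) = 0"
  unfolding torus_lap_def sum_subtractf sum_divide_distrib[symmetric] sum_neighbours_torus[OF assms(1)]
  using assms(2) by simp

lemma torus_lap_sum: "torus_lap n d (\<lambda>v. \<Sum>z\<in>Z. h z v) w = (\<Sum>z\<in>Z. torus_lap n d (h z) w)"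
  unfolding torus_lap_def by (simp add: sum_subtractf sum_divide_distrib sum.swap[of _ Z])

lemma torus_lap_divide: "torus_lap n d (\<lambda>v. f v / c) w = torus_lap n d f w / c"
  unfolding torus_lap_def by (simp add: sum_divide_distrib[symmetric] diff_divide_distrib)

lemma torus_lap_diff: "torus_lap n d (\<lambda>v. f v - g v) w = torus_lap n d f w - torus_lap n d g w"
  unfolding torus_lap_def by (simp add: sum_subtractf diff_divide_distrib)

lemma torus_lap_green_killed:
  assumes "z \<in> torus n d" "x \<in> torus n d" "n \<ge> 1" "d \<ge> 1" "x \<noteq> z"
  shows "torus_lap n d (\<lambda>v. green_killed n d z v y) x = (if x = y then 1 else 0)"
  using green_killed_first_step[OF assms, of y]
  by (simp add: torus_lap_def sum_divide_distrib add_divide_distrib)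

text \<open>Summing \<open>torus_lap\<close> over the torus: the walk killed at \<open>z\<close> leaves \<open>z\<close> towards \<open>y \<noteq> z\<close>
  exactly once on average.\<close>

lemma green_killed_exit_mass:
  assumes "z \<in> torus n d" "y \<in> torus n d" "n \<ge> 1" "d \<ge> 1"
  shows "torus_lap n d (\<lambda>v. green_killed n d z v y) z = (if y = z then 0 else -1)"
proof -
  let ?f = "\<lambda>v. green_killed n d z v y"
  have "0 = (\<Sum>w\<in>torus n d. torus_lap n d ?f w)" using sum_torus_lap[OF assms(3,4)] by simp
  also have "\<dots> = torus_lap n d ?f z + (\<Sum>w\<in>torus n d - {z}. torus_lap n d ?f w)"
    using assms(1) finite_torus by (simp add: sum.remove)
  also have "(\<Sum>w\<in>torus n d - {z}. torus_lap n d ?f w) = (\<Sum>w\<in>torus n d - {z}. if w = y then 1 else 0)"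
    using assms by (intro sum.cong refl) (auto simp: torus_lap_green_killed)
  also have "\<dots> = (if y = z then 0 else 1)"
    using assms(2) finite_torus by (simp add: sum.delta)
  finally show ?thesis by (cases "y = z") auto
qed

lemma torus_lap_green_avg:
  assumes "w \<in> torus n d" "y \<in> torus n d" "n \<ge> 1" "d \<ge> 1"
  shows "torus_lap n d (\<lambda>v. green_avg n d v y) w = (if w = y then 1 else 0) - 1 / real n ^ d"
proof -
  have "(\<Sum>z\<in>torus n d. torus_lap n d (\<lambda>v. green_killed n d z v y) w)
      = torus_lap n d (\<lambda>v. green_killed n d w v y) w
        + (\<Sum>z\<in>torus n d - {w}. torus_lap n d (\<lambda>v. green_killed n d z v y) w)"
    using assms(1) finite_torus by (simp add: sum.remove)
  also have "(\<Sum>z\<in>torus n d - {w}. torus_lap n d (\<lambda>v. green_killed n d z v y) w)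
      = (\<Sum>z\<in>torus n d - {w}. if w = y then 1 else 0)"
    using assms by (intro sum.cong refl) (auto simp: torus_lap_green_killed)
  also have "\<dots> = (if w = y then real (n ^ d) - 1 else 0)"
    using assms(1,3) finite_torus card_torus[of n d] by (simp add: card_Diff_singleton of_nat_diff)
  finally have "(\<Sum>z\<in>torus n d. torus_lap n d (\<lambda>v. green_killed n d z v y) w) =
      (if w = y then real n ^ d else 0) - 1"
    using green_killed_exit_mass[OF assms(1,2,3,4)] by auto
  then show ?thesis
    unfolding green_avg_def torus_lap_divide torus_lap_sum using assms(3) by (auto simp: field_simps)
qed

definition green_diff :: "nat \<Rightarrow> nat \<Rightarrow> (nat \<Rightarrow> int) \<Rightarrow> (nat \<Rightarrow> int) \<Rightarrow> real" where
  "green_diff n d x v = green_avg n d v torus_zero - green_avg n d v x"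

lemma torus_lap_green_diff:
  assumes "w \<in> torus n d" "x \<in> torus n d" "n \<ge> 1" "d \<ge> 1"
  shows "torus_lap n d (green_diff n d x) w = (if w = torus_zero then 1 else 0) - (if w = x then 1 else 0)"
  unfolding green_diff_def torus_lap_diff
  using torus_lap_green_avg[OF assms(1) torus_zero_in_torus[OF assms(3)] assms(3,4)]
    torus_lap_green_avg[OF assms(1,2,3,4)] by simp

lemma eta_incr_var_eq_sum_green_diff:
  "eta_incr_var n d torus_zero x = (\<Sum>v\<in>torus n d. (green_diff n d x v)\<^sup>2) / (2 * real d)\<^sup>2"
proof -
  have "(\<Sum>v\<in>torus n d. (green_diff n d x v)\<^sup>2) =
      (\<Sum>v\<in>torus n d. green_avg n d v torus_zero * green_avg n d v torus_zero) +
      (\<Sum>v\<in>torus n d. green_avg n d v x * green_avg n d v x) -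
      2 * (\<Sum>v\<in>torus n d. green_avg n d v torus_zero * green_avg n d v x)"
    unfolding green_diff_def
    by (simp add: power2_eq_square algebra_simps sum.distrib sum_subtractf sum_distrib_left)
  then show ?thesis
    unfolding eta_incr_var_def eta_cov_def by (simp add: diff_divide_distrib add_divide_distrib)
qed

lemma eta_incr_var_nonneg: "eta_incr_var n d torus_zero x \<ge> 0"
  unfolding eta_incr_var_eq_sum_green_diff by (auto intro!: divide_nonneg_nonneg sum_nonneg)

lemma torus_lap_self_adjoint:
  assumes "n \<ge> 1" "d \<ge> 1"
  shows "(\<Sum>w\<in>torus n d. u w * torus_lap n d \<phi> w) = (\<Sum>w\<in>torus n d. torus_lap n d u w * \<phi> w)"
proof -
  have shift: "(\<Sum>w\<in>torus n d. u w * \<phi> (tstep n w i s)) = (\<Sum>w\<in>torus n d. u (tstep n w i (-s)) * \<phi> w)"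
    if "i < d" for i s
    using sum_torus_tstep[OF that assms(1), of "\<lambda>w. u (tstep n w i (-s)) * \<phi> w" s]
    by (simp add: tstep_tstep_uminus cong: sum.cong)
  have "(\<Sum>w\<in>torus n d. u w * (\<Sum>i<d. \<Sum>s\<in>{1::int, -1}. \<phi> (tstep n w i s)))
      = (\<Sum>i<d. \<Sum>s\<in>{1::int, -1}. \<Sum>w\<in>torus n d. u w * \<phi> (tstep n w i s))"
    by (simp add: sum_distrib_left sum.swap[of _ "torus n d"] distrib_left)
  also have "\<dots> = (\<Sum>i<d. \<Sum>s\<in>{1::int, -1}. \<Sum>w\<in>torus n d. u (tstep n w i (-s)) * \<phi> w)"
    by (intro sum.cong refl shift) auto
  also have "\<dots> = (\<Sum>i<d. \<Sum>s\<in>{1::int, -1}. \<Sum>w\<in>torus n d. u (tstep n w i s) * \<phi> w)"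
    by (simp add: add.commute)
  also have "\<dots> = (\<Sum>w\<in>torus n d. (\<Sum>i<d. \<Sum>s\<in>{1::int, -1}. u (tstep n w i s)) * \<phi> w)"
    by (simp add: sum_distrib_right sum.swap[of _ "torus n d"] distrib_right)
  finally show ?thesis
    unfolding torus_lap_def right_diff_distrib left_diff_distrib sum_subtractf
    by (simp add: sum_divide_distrib[symmetric] mult.assoc)
qed

text \<open>Since \<open>torus_lap (green_diff x) = \<delta>\<^sub>0 - \<delta>\<^sub>x\<close>, the increment \<open>\<phi> 0 - \<phi> x\<close> of any
  function is the inner product of \<open>green_diff x\<close> with \<open>torus_lap \<phi>\<close>; Cauchy--Schwarz then
  turns every test function \<open>\<phi>\<close> into a lower bound for the variance.\<close>

theorem eta_incr_var_test_function_bound: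
  assumes "n \<ge> 1" "d \<ge> 1" "x \<in> torus n d" "x \<noteq> torus_zero"
  shows "(\<phi> torus_zero - \<phi> x)\<^sup>2
    \<le> (2 * real d)\<^sup>2 * eta_incr_var n d torus_zero x * (\<Sum>w\<in>torus n d. (torus_lap n d \<phi> w)\<^sup>2)"
proof -
  have "(\<Sum>w\<in>torus n d. green_diff n d x w * torus_lap n d \<phi> w)
      = (\<Sum>w\<in>torus n d. torus_lap n d (green_diff n d x) w * \<phi> w)"
    by (rule torus_lap_self_adjoint[OF assms(1,2)])
  also have "\<dots> = (\<Sum>w\<in>torus n d. (if w = torus_zero then \<phi> w else 0) - (if w = x then \<phi> w else 0))"
    using assms by (intro sum.cong refl) (auto simp: torus_lap_green_diff)
  also have "\<dots> = \<phi> torus_zero - \<phi> x"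
    using assms torus_zero_in_torus[OF assms(1)] finite_torus by (simp add: sum_subtractf sum.delta)
  finally have "(\<phi> torus_zero - \<phi> x)\<^sup>2
      \<le> (\<Sum>w\<in>torus n d. (green_diff n d x w)\<^sup>2) * (\<Sum>w\<in>torus n d. (torus_lap n d \<phi> w)\<^sup>2)"
    using Cauchy_Schwarz_ineq_sum by metis
  then show ?thesis
    using assms(2) by (simp add: eta_incr_var_eq_sum_green_diff mult.assoc)
qed

definition centred_coords :: "nat \<Rightarrow> (nat \<Rightarrow> int) \<Rightarrow> nat \<Rightarrow> int" where
  "centred_coords n w = (\<lambda>i. centred_rep n (w i))"

definition sqnorm :: "nat \<Rightarrow> (nat \<Rightarrow> int) \<Rightarrow> real" where
  "sqnorm d v = (\<Sum>i<d. (real_of_int (v i))\<^sup>2)"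

lemma sqnorm_nonneg: "sqnorm d v \<ge> 0"
  unfolding sqnorm_def by (auto intro: sum_nonneg)

lemma torus_norm_eq_sqrt_sqnorm: "torus_norm n d w = sqrt (sqnorm d (centred_coords n w))"
  by (simp add: torus_norm_def sqnorm_def centred_coords_def)

lemma sqnorm_centred_coords: "sqnorm d (centred_coords n w) = (torus_norm n d w)\<^sup>2"
  by (simp add: torus_norm_eq_sqrt_sqnorm sqnorm_nonneg)

lemma centred_coords_torus_zero: "centred_coords n torus_zero = (\<lambda>i. 0)"
  by (simp add: centred_coords_def torus_zero_def centred_rep_def)

lemma sqnorm_zero [simp]: "sqnorm d (\<lambda>i. 0) = 0"
  by (simp add: sqnorm_def)

lemma coord_power2_le_sqnorm: "i < d \<Longrightarrow> (real_of_int (v i))\<^sup>2 \<le> sqnorm d v"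
  unfolding sqnorm_def by (rule member_le_sum) auto

lemma abs_coord_le_sqrt_sqnorm: "i < d \<Longrightarrow> \<bar>real_of_int (v i)\<bar> \<le> sqrt (sqnorm d v)"
  using real_sqrt_le_mono[OF coord_power2_le_sqnorm[of i d v]] by simp

lemma sqnorm_fun_upd:
  assumes "i < d"
  shows "sqnorm d (v(i := t)) = sqnorm d v - (real_of_int (v i))\<^sup>2 + (real_of_int t)\<^sup>2"
proof -
  have "sqnorm d (v(i := t)) = (real_of_int t)\<^sup>2 + (\<Sum>j\<in>{..<d}-{i}. (real_of_int (v j))\<^sup>2)"
    and "sqnorm d v = (real_of_int (v i))\<^sup>2 + (\<Sum>j\<in>{..<d}-{i}. (real_of_int (v j))\<^sup>2)"
    unfolding sqnorm_def using assms by (simp_all add: sum.remove)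
  then show ?thesis by simp
qed

lemma sqnorm_step:
  "i < d \<Longrightarrow> sqnorm d (v(i := v i + s)) = sqnorm d v + 2 * real_of_int s * real_of_int (v i) + (real_of_int s)\<^sup>2"
  by (simp add: sqnorm_fun_upd power2_eq_square algebra_simps)

lemma centred_rep_bounds:
  assumes "0 \<le> a" "a < int n"
  shows "- int n < 2 * centred_rep n a" "2 * centred_rep n a \<le> int n" "centred_rep n a mod int n = a"
  using assms by (auto simp: centred_rep_def mod_pos_pos_trivial)

lemma centred_eqI:
  fixes p q :: int
  assumes "- int n < 2 * p" "2 * p \<le> int n" "- int n < 2 * q" "2 * q \<le> int n"
    and "p mod int n = q mod int n"
  shows "p = q"
proof (rule ccontr)
  assume "p \<noteq> q"
  moreover have "int n dvd p - q" using assms(5) by (simp add: mod_eq_dvd_iff)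
  ultimately have "\<bar>int n\<bar> \<le> \<bar>p - q\<bar>" by (intro dvd_imp_le_int) auto
  then show False using assms(1-4) by linarith
qed

lemma centred_coords_tstep_other: "j \<noteq> i \<Longrightarrow> centred_coords n (tstep n w i s) j = centred_coords n w j"
  by (simp add: centred_coords_def tstep_def)

lemma centred_coords_tstep_same:
  assumes "w \<in> torus n d" "i < d" "n \<ge> 1" "s = 1 \<or> s = -1"
  defines "c \<equiv> centred_coords n w i"
  obtains "centred_coords n (tstep n w i s) i = c + s" "- int n < 2 * (c + s)" "2 * (c + s) \<le> int n"
  | "centred_coords n (tstep n w i s) i = c + s - int n" "2 * (c + s) > int n"
  | "centred_coords n (tstep n w i s) i = c + s + int n" "2 * (c + s) \<le> - int n"
proof -
  let ?c' = "centred_coords n (tstep n w i s) i"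
  have wi: "0 \<le> w i" "w i < int n" using assms(1,2) by (auto simp: torus_def)
  have ws: "0 \<le> (w i + s) mod int n" "(w i + s) mod int n < int n" using assms(3) by auto
  have c: "- int n < 2 * c" "2 * c \<le> int n" "c mod int n = w i"
    using centred_rep_bounds[OF wi] by (auto simp: c_def centred_coords_def)
  have c': "- int n < 2 * ?c'" "2 * ?c' \<le> int n" "?c' mod int n = (w i + s) mod int n"
    using centred_rep_bounds[OF ws] by (auto simp: centred_coords_def tstep_def)
  have cong: "?c' mod int n = (c + s) mod int n" using c'(3) c(3) by (metis mod_add_left_eq)
  have n: "int n \<ge> 1" and s: "-1 \<le> s" "s \<le> 1" using assms(3,4) by auto
  consider "- int n < 2 * (c + s) \<and> 2 * (c + s) \<le> int n" | "2 * (c + s) > int n" | "2 * (c + s) \<le> - int n"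
    by linarith
  then show ?thesis
  proof cases
    case 1
    then show ?thesis using that(1) centred_eqI[OF c'(1,2) _ _ cong] by blast
  next
    case 2
    have "?c' = c + s - int n"
    proof (rule centred_eqI[OF c'(1,2)])
      show "- int n < 2 * (c + s - int n)" using 2 by (simp add: algebra_simps)
      show "2 * (c + s - int n) \<le> int n" using c(2) n s by (simp add: algebra_simps)
    qed (simp add: cong)
    then show ?thesis using that(2) 2 by blast
  next
    case 3
    have "?c' = c + s + int n"
    proof (rule centred_eqI[OF c'(1,2)])
      show "- int n < 2 * (c + s + int n)" using c(1) n s by (simp add: algebra_simps)
      show "2 * (c + s + int n) \<le> int n" using 3 by (simp add: algebra_simps)
    qed (simp add: cong)
    then show ?thesis using that(3) 3 by blast
  qed
qed

lemma abs_centred_coords_tstep_ge: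
  assumes "w \<in> torus n d" "i < d" "n \<ge> 1" "s = 1 \<or> s = -1"
  shows "\<bar>centred_coords n (tstep n w i s) i\<bar> \<ge> \<bar>centred_coords n w i\<bar> - 1"
proof -
  have "- int n < 2 * centred_coords n w i" "2 * centred_coords n w i \<le> int n"
    using assms(1,2) centred_rep_bounds[of "w i" n] by (auto simp: torus_def centred_coords_def)
  then show ?thesis
    using assms(4) by (cases rule: centred_coords_tstep_same[OF assms]) auto
qed

lemma centred_coords_tstep:
  assumes "w \<in> torus n d" "i < d" "n \<ge> 1" "s = 1 \<or> s = -1" "2 * torus_norm n d w + 2 < real n"
  shows "centred_coords n (tstep n w i s) = (centred_coords n w)(i := centred_coords n w i + s)"
proof
  fix j
  show "centred_coords n (tstep n w i s) j = ((centred_coords n w)(i := centred_coords n w i + s)) j"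
  proof (cases "j = i")
    case True
    have "\<bar>real_of_int (centred_coords n w i)\<bar> \<le> torus_norm n d w"
      using abs_coord_le_sqrt_sqnorm[OF assms(2)] by (simp add: torus_norm_eq_sqrt_sqnorm)
    then have "- int n < 2 * (centred_coords n w i + s)" "2 * (centred_coords n w i + s) \<le> int n"
      using assms(4,5) by (auto simp: abs_le_iff)
    then show ?thesis
      using True by (cases rule: centred_coords_tstep_same[OF assms(1-4)]) auto
  qed (simp add: centred_coords_tstep_other)
qed

lemma torus_norm_tstep_ge:
  assumes "w \<in> torus n d" "i < d" "n \<ge> 1" "s = 1 \<or> s = -1" "torus_norm n d w \<ge> 1"
  shows "torus_norm n d (tstep n w i s) \<ge> torus_norm n d w - 1"
proof -
  let ?c = "real_of_int (centred_coords n w i)"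
  let ?c' = "real_of_int (centred_coords n (tstep n w i s) i)"
  let ?r = "torus_norm n d w"
  have "centred_coords n (tstep n w i s) = (centred_coords n w)(i := centred_coords n (tstep n w i s) i)"
    by (auto simp: fun_eq_iff centred_coords_tstep_other)
  then have sq': "(torus_norm n d (tstep n w i s))\<^sup>2 = ?r\<^sup>2 - ?c\<^sup>2 + ?c'\<^sup>2"
    using sqnorm_fun_upd[OF assms(2)] by (metis sqnorm_centred_coords)
  have c': "\<bar>?c'\<bar> \<ge> \<bar>?c\<bar> - 1"
    using abs_centred_coords_tstep_ge[OF assms(1-4)] by linarith
  have c: "\<bar>?c\<bar> \<le> ?r"
    using abs_coord_le_sqrt_sqnorm[OF assms(2)] by (simp add: torus_norm_eq_sqrt_sqnorm)
  have "(torus_norm n d (tstep n w i s))\<^sup>2 \<ge> (?r - 1)\<^sup>2"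
  proof (cases "\<bar>?c\<bar> \<ge> 1")
    case True
    then have "\<bar>?c'\<bar>\<^sup>2 \<ge> (\<bar>?c\<bar> - 1)\<^sup>2" using c' by (intro power_mono) auto
    then have "?c'\<^sup>2 \<ge> ?c\<^sup>2 - 2 * \<bar>?c\<bar> + 1" by (simp add: power2_eq_square algebra_simps)
    moreover have "(?r - 1)\<^sup>2 = ?r\<^sup>2 - 2 * ?r + 1" by (simp add: power2_eq_square algebra_simps)
    ultimately show ?thesis using sq' c by linarith
  next
    case False
    then have "\<bar>centred_coords n w i\<bar> < 1" by linarith
    then have "?c = 0" by simp
    moreover have "(?r - 1)\<^sup>2 \<le> ?r\<^sup>2" using assms(5) by (simp add: power2_eq_square algebra_simps)
    ultimately show ?thesis using sq' by (simp add: add_increasing2)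
  qed
  then show ?thesis by (rule power2_le_imp_le) (simp add: torus_norm_eq_sqrt_sqnorm sqnorm_nonneg)
qed

lemma card_torus_ball:
  assumes "M \<ge> 0"
  shows "real (card {w \<in> torus n d. torus_norm n d w < M}) \<le> (2 * M + 1) ^ d"
proof -
  define k where "k = \<lfloor>M\<rfloor>"
  have k: "k \<ge> 0" using assms by (simp add: k_def)
  let ?A = "{w \<in> torus n d. torus_norm n d w < M}"
  let ?B = "PiE {..<d} (\<lambda>_. {-k..k})"
  let ?f = "\<lambda>w. restrict (centred_coords n w) {..<d}"
  have "inj_on ?f ?A"
  proof (rule inj_onI)
    fix w w' assume w: "w \<in> ?A" and w': "w' \<in> ?A" and eq: "?f w = ?f w'"
    show "w = w'"
    proof
      fix i
      show "w i = w' i"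
      proof (cases "i < d")
        case True
        then have "centred_rep n (w i) mod int n = centred_rep n (w' i) mod int n"
          using fun_cong[OF eq, of i] by (simp add: centred_coords_def)
        moreover have "0 \<le> w i" "w i < int n" "0 \<le> w' i" "w' i < int n"
          using w w' True by (auto simp: torus_def)
        ultimately show ?thesis using centred_rep_bounds(3) by metis
      qed (use w w' in \<open>auto simp: torus_def\<close>)
    qed
  qed
  moreover have "?f ` ?A \<subseteq> ?B"
  proof (clarsimp simp: restrict_PiE_iff)
    fix w i assume w: "w \<in> torus n d" "torus_norm n d w < M" and i: "i < d"
    have "\<bar>real_of_int (centred_coords n w i)\<bar> < M"
      using abs_coord_le_sqrt_sqnorm[OF i, of "centred_coords n w"] w(2)
      by (simp add: torus_norm_eq_sqrt_sqnorm)
    then show "- k \<le> centred_coords n w i \<and> centred_coords n w i \<le> k" unfolding k_def by linarith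
  qed
  ultimately have "card ?A \<le> card ?B" by (intro card_inj_on_le) (simp_all add: finite_PiE)
  also have "card ?B = nat (2 * k + 1) ^ d" using k by (simp add: card_PiE)
  finally have "real (card ?A) \<le> real (nat (2 * k + 1)) ^ d" by (metis of_nat_le_iff of_nat_power)
  also have "\<dots> \<le> (2 * M + 1) ^ d" using k unfolding k_def by (intro power_mono) linarith+
  finally show ?thesis .
qed

section \<open>Test functions adapted to a scale\<close>

definition lattice_lap :: "nat \<Rightarrow> ((nat \<Rightarrow> int) \<Rightarrow> real) \<Rightarrow> (nat \<Rightarrow> int) \<Rightarrow> real" where
  "lattice_lap d \<Phi> v = \<Phi> v - (\<Sum>i<d. \<Sum>s\<in>{1::int, -1}. \<Phi> (v(i := v i + s))) / (2 * real d)"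

lemma torus_lap_eq_lattice_lap:
  assumes "w \<in> torus n d" "n \<ge> 1" "2 * torus_norm n d w + 2 < real n"
  shows "torus_lap n d (\<lambda>w. \<Phi> (centred_coords n w)) w = lattice_lap d \<Phi> (centred_coords n w)"
  using centred_coords_tstep[OF assms(1) _ assms(2) _ assms(3)]
  by (simp add: torus_lap_def lattice_lap_def)

lemma torus_lap_eq_0_outside:
  assumes "w \<in> torus n d" "n \<ge> 1" "B \<ge> 0" "\<And>v. sqnorm d v \<ge> B\<^sup>2 \<Longrightarrow> \<Phi> v = 0"
    and "torus_norm n d w \<ge> B + 1"
  shows "torus_lap n d (\<lambda>w. \<Phi> (centred_coords n w)) w = 0"
proof -
  have vanish: "\<Phi> (centred_coords n v) = 0" if "torus_norm n d v \<ge> B" for v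
    using that assms(3,4) power_mono[of B "torus_norm n d v" 2] by (simp add: sqnorm_centred_coords)
  have "torus_norm n d (tstep n w i s) \<ge> B" if "i < d" "s \<in> {1, -1}" for i s
  proof -
    have "torus_norm n d (tstep n w i s) \<ge> torus_norm n d w - 1"
      using that(2) assms(3,5) by (intro torus_norm_tstep_ge[OF assms(1) that(1) assms(2)]) auto
    then show ?thesis using assms(5) by linarith
  qed
  then have "\<Phi> (centred_coords n (tstep n w i s)) = 0" if "i < d" "s \<in> {1, -1}" for i s
    using vanish that by blast
  moreover have "\<Phi> (centred_coords n w) = 0" using vanish assms(5) by simp
  ultimately show ?thesis by (simp add: torus_lap_def)
qed

text \<open>The Laplacian of such a \<open>\<Phi>\<close> is supported in the annulus \<open>R - 1 < |v| < 2R + 1\<close>.\<close>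

definition scale_adapted :: "nat \<Rightarrow> real \<Rightarrow> real \<Rightarrow> ((nat \<Rightarrow> int) \<Rightarrow> real) \<Rightarrow> bool" where
  "scale_adapted d R b \<Phi> \<longleftrightarrow> R \<ge> 0 \<and>
     (\<forall>v. sqnorm d v \<ge> (2 * R)\<^sup>2 \<longrightarrow> \<Phi> v = 0) \<and>
     (\<forall>v. sqrt (sqnorm d v) < 2 * R + 1 \<longrightarrow> \<bar>lattice_lap d \<Phi> v\<bar> \<le> b) \<and>
     (\<forall>v. sqrt (sqnorm d v) \<le> R - 1 \<longrightarrow> lattice_lap d \<Phi> v = 0)"

lemma torus_lap_scale_adapted:
  assumes "scale_adapted d R b \<Phi>" "w \<in> torus n d" "n \<ge> 1" "4 * R + 4 < real n"
  defines "a \<equiv> torus_lap n d (\<lambda>w. \<Phi> (centred_coords n w)) w"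
  shows "a = 0 \<or> (R - 1 < torus_norm n d w \<and> torus_norm n d w < 2 * R + 1 \<and> \<bar>a\<bar> \<le> b)"
proof (cases "torus_norm n d w \<ge> 2 * R + 1")
  case True
  have "a = 0"
    unfolding a_def using assms(1) True
    by (intro torus_lap_eq_0_outside[OF assms(2,3)]) (auto simp: scale_adapted_def)
  then show ?thesis by simp
next
  case False
  then have near: "torus_norm n d w < 2 * R + 1" by simp
  have a: "a = lattice_lap d \<Phi> (centred_coords n w)"
    unfolding a_def using assms(4) near by (intro torus_lap_eq_lattice_lap[OF assms(2,3)]) linarith
  have r: "sqrt (sqnorm d (centred_coords n w)) = torus_norm n d w"
    by (simp add: torus_norm_eq_sqrt_sqnorm)
  show ?thesis
  proof (cases "torus_norm n d w \<le> R - 1")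
    case True
    then show ?thesis using assms(1) a r by (simp add: scale_adapted_def)
  next
    case False
    then show ?thesis using assms(1) a r near by (simp add: scale_adapted_def)
  qed
qed

lemma power2_sum_disjoint_support:
  fixes f :: "'a \<Rightarrow> real"
  assumes "finite A" "\<And>j k. j \<in> A \<Longrightarrow> k \<in> A \<Longrightarrow> j \<noteq> k \<Longrightarrow> f j = 0 \<or> f k = 0"
  shows "(\<Sum>j\<in>A. f j)\<^sup>2 = (\<Sum>j\<in>A. (f j)\<^sup>2)"
proof (cases "\<exists>j\<in>A. f j \<noteq> 0")
  case True
  then obtain j where j: "j \<in> A" "f j \<noteq> 0" by blast
  then have others: "f k = 0" if "k \<in> A - {j}" for k using assms(2)[of j k] that by auto
  have "(\<Sum>j\<in>A. f j) = f j" and "(\<Sum>j\<in>A. (f j)\<^sup>2) = (f j)\<^sup>2"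
    using sum.remove[OF assms(1) j(1), of f] sum.remove[OF assms(1) j(1), of "\<lambda>j. (f j)\<^sup>2"] others
    by simp_all
  then show ?thesis by simp
qed simp

text \<open>Test functions at well separated scales have Laplacians with disjoint supports, so the
  energies of the scales simply add up; each is bounded by the number of points of the
  annulus times the square of the Laplacian bound.\<close>

lemma sum_torus_lap_multiscale:
  fixes \<Phi> :: "nat \<Rightarrow> (nat \<Rightarrow> int) \<Rightarrow> real" and R b :: "nat \<Rightarrow> real"
  assumes "n \<ge> 1"
    and adapted: "\<And>j. j < J \<Longrightarrow> scale_adapted d (R j) (b j) (\<Phi> j)"
    and small: "\<And>j. j < J \<Longrightarrow> 4 * R j + 4 < real n"
    and separated: "\<And>j k. j < k \<Longrightarrow> k < J \<Longrightarrow> 2 * R j + 1 \<le> R k - 1"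
  shows "(\<Sum>w\<in>torus n d. (torus_lap n d (\<lambda>w. \<Sum>j<J. \<Phi> j (centred_coords n w)) w)\<^sup>2)
    \<le> (\<Sum>j<J. (4 * R j + 3) ^ d * (b j)\<^sup>2)"
proof -
  define a where "a j w = torus_lap n d (\<lambda>w. \<Phi> j (centred_coords n w)) w" for j w
  have a: "a j w = 0 \<or> (R j - 1 < torus_norm n d w \<and> torus_norm n d w < 2 * R j + 1 \<and> \<bar>a j w\<bar> \<le> b j)"
    if "w \<in> torus n d" "j < J" for w j
    unfolding a_def using torus_lap_scale_adapted[OF adapted[OF that(2)] that(1) assms(1) small[OF that(2)]] .
  have disjoint: "a j w = 0 \<or> a k w = 0" if "w \<in> torus n d" "j < J" "k < J" "j \<noteq> k" for w j k
    using a[of w j] a[of w k] separated[of j k] separated[of k j] that by (cases "j < k") auto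
  have "(\<Sum>w\<in>torus n d. (torus_lap n d (\<lambda>w. \<Sum>j<J. \<Phi> j (centred_coords n w)) w)\<^sup>2)
      = (\<Sum>w\<in>torus n d. \<Sum>j<J. (a j w)\<^sup>2)"
    unfolding a_def[symmetric] torus_lap_sum
    by (intro sum.cong refl power2_sum_disjoint_support) (use disjoint in auto)
  also have "\<dots> \<le> (\<Sum>j<J. \<Sum>w\<in>torus n d. if torus_norm n d w < 2 * R j + 1 then (b j)\<^sup>2 else 0)"
    unfolding sum.swap[of _ "torus n d"]
  proof (intro sum_mono)
    fix j w assume "j \<in> {..<J}" "w \<in> torus n d"
    moreover have "(a j w)\<^sup>2 \<le> (b j)\<^sup>2" if "\<bar>a j w\<bar> \<le> b j"
      using power_mono[OF that abs_ge_zero, of 2] by simp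
    ultimately show "(a j w)\<^sup>2 \<le> (if torus_norm n d w < 2 * R j + 1 then (b j)\<^sup>2 else 0)"
      using a[of w j] by auto
  qed
  also have "\<dots> = (\<Sum>j<J. real (card {w \<in> torus n d. torus_norm n d w < 2 * R j + 1}) * (b j)\<^sup>2)"
    by (simp add: sum.If_cases finite_torus Int_def conj_commute)
  also have "\<dots> \<le> (\<Sum>j<J. (4 * R j + 3) ^ d * (b j)\<^sup>2)"
  proof (intro sum_mono mult_right_mono)
    fix j assume "j \<in> {..<J}"
    then have "real (card {w \<in> torus n d. torus_norm n d w < 2 * R j + 1}) \<le> (2 * (2 * R j + 1) + 1) ^ d"
      using adapted[of j] by (intro card_torus_ball) (auto simp: scale_adapted_def)
    then show "real (card {w \<in> torus n d. torus_norm n d w < 2 * R j + 1}) \<le> (4 * R j + 3) ^ d"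
      by (simp add: algebra_simps)
  qed simp
  finally show ?thesis .
qed

theorem eta_incr_var_multiscale_bound:
  fixes \<Phi> :: "nat \<Rightarrow> (nat \<Rightarrow> int) \<Rightarrow> real" and R b :: "nat \<Rightarrow> real"
  assumes "n \<ge> 1" "d \<ge> 1" "x \<in> torus n d" "x \<noteq> torus_zero"
    and "\<And>j. j < J \<Longrightarrow> scale_adapted d (R j) (b j) (\<Phi> j)"
    and "\<And>j. j < J \<Longrightarrow> 4 * R j + 4 < real n"
    and "\<And>j k. j < k \<Longrightarrow> k < J \<Longrightarrow> 2 * R j + 1 \<le> R k - 1"
  shows "((\<Sum>j<J. \<Phi> j (\<lambda>i. 0)) - (\<Sum>j<J. \<Phi> j (centred_coords n x)))\<^sup>2
    \<le> (2 * real d)\<^sup>2 * eta_incr_var n d torus_zero x * (\<Sum>j<J. (4 * R j + 3) ^ d * (b j)\<^sup>2)"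
proof -
  let ?\<phi> = "\<lambda>w. \<Sum>j<J. \<Phi> j (centred_coords n w)"
  have "(?\<phi> torus_zero - ?\<phi> x)\<^sup>2
      \<le> (2 * real d)\<^sup>2 * eta_incr_var n d torus_zero x * (\<Sum>w\<in>torus n d. (torus_lap n d ?\<phi> w)\<^sup>2)"
    by (rule eta_incr_var_test_function_bound[OF assms(1-4)])
  also have "\<dots> \<le> (2 * real d)\<^sup>2 * eta_incr_var n d torus_zero x * (\<Sum>j<J. (4 * R j + 3) ^ d * (b j)\<^sup>2)"
    using eta_incr_var_nonneg by (intro mult_left_mono sum_torus_lap_multiscale[OF assms(1,5-7)]) auto
  finally show ?thesis by (simp add: centred_coords_torus_zero)
qed

corollary eta_incr_var_single_scale_bound:
  assumes "n \<ge> 1" "d \<ge> 1" "x \<in> torus n d" "x \<noteq> torus_zero"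
    and "scale_adapted d R b \<Phi>" "4 * R + 4 < real n"
  shows "(\<Phi> (\<lambda>i. 0) - \<Phi> (centred_coords n x))\<^sup>2
    \<le> (2 * real d)\<^sup>2 * eta_incr_var n d torus_zero x * ((4 * R + 3) ^ d * b\<^sup>2)"
  using eta_incr_var_multiscale_bound[OF assms(1-4), of 1 "\<lambda>_. R" "\<lambda>_. b" "\<lambda>_. \<Phi>"] assms(5,6)
  by simp

section \<open>The bump and the linear bump\<close>

definition ramp_sq :: "real \<Rightarrow> real" where
  "ramp_sq t = (max t 0)\<^sup>2"

text \<open>A \<open>C\<^sup>1\<close> profile with piecewise constant second derivative \<open>-4/9, 4/9, 0\<close> on
  \<open>[1, 5/2], [5/2, 4], [4, \<infinity>)\<close>: it equals \<open>1\<close> up to \<open>1\<close> and \<open>0\<close> from \<open>4\<close> on.\<close>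

definition bump_profile :: "real \<Rightarrow> real" where
  "bump_profile t = 1 - 2/9 * (ramp_sq (t - 1) - 2 * ramp_sq (t - 5/2) + ramp_sq (t - 4))"

definition bump_profile_deriv :: "real \<Rightarrow> real" where
  "bump_profile_deriv t = - 2/9 * (2 * max (t - 1) 0 - 4 * max (t - 5/2) 0 + 2 * max (t - 4) 0)"

lemma ramp_sq_taylor:
  "0 \<le> ramp_sq (a + u) - ramp_sq a - 2 * max a 0 * u"
  "ramp_sq (a + u) - ramp_sq a - 2 * max a 0 * u \<le> u\<^sup>2"
proof -
  have "0 \<le> ramp_sq (a + u) - ramp_sq a - 2 * max a 0 * u \<and> ramp_sq (a + u) - ramp_sq a - 2 * max a 0 * u \<le> u\<^sup>2"
  proof (cases "a \<ge> 0"; cases "a + u \<ge> 0")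
    assume "a \<ge> 0" "a + u \<ge> 0"
    then have "ramp_sq (a + u) - ramp_sq a - 2 * max a 0 * u = u\<^sup>2"
      by (simp add: ramp_sq_def power2_eq_square algebra_simps)
    then show ?thesis by simp
  next
    assume a: "a \<ge> 0" "\<not> a + u \<ge> 0"
    then have eq: "ramp_sq (a + u) - ramp_sq a - 2 * max a 0 * u = - a * (a + 2 * u)"
      by (simp add: ramp_sq_def power2_eq_square algebra_simps)
    have "0 \<le> - a * (a + 2 * u)" using a by (simp add: mult_nonneg_nonpos)
    moreover have "- a * (a + 2 * u) \<le> u\<^sup>2"
      using zero_le_power2[of "a + u"] by (simp add: power2_eq_square algebra_simps)
    ultimately show ?thesis using eq by simp
  next
    assume a: "\<not> a \<ge> 0" "a + u \<ge> 0"
    then have "ramp_sq (a + u) - ramp_sq a - 2 * max a 0 * u = (a + u)\<^sup>2"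
      by (simp add: ramp_sq_def)
    moreover have "(a + u)\<^sup>2 \<le> u\<^sup>2" using a by (intro power_mono) auto
    ultimately show ?thesis by simp
  next
    assume "\<not> a \<ge> 0" "\<not> a + u \<ge> 0"
    then show ?thesis by (simp add: ramp_sq_def)
  qed
  then show "0 \<le> ramp_sq (a + u) - ramp_sq a - 2 * max a 0 * u"
    "ramp_sq (a + u) - ramp_sq a - 2 * max a 0 * u \<le> u\<^sup>2" by auto
qed

lemma bump_profile_taylor:
  "\<bar>bump_profile (a + u) - bump_profile a - bump_profile_deriv a * u\<bar> \<le> 8/9 * u\<^sup>2"
proof -
  define e where "e c = ramp_sq (a - c + u) - ramp_sq (a - c) - 2 * max (a - c) 0 * u" for c
  have e: "0 \<le> e c" "e c \<le> u\<^sup>2" for c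
    using ramp_sq_taylor[of "a - c" u] by (auto simp: e_def)
  have "bump_profile (a + u) - bump_profile a - bump_profile_deriv a * u = - 2/9 * (e 1 - 2 * e (5/2) + e 4)"
    unfolding bump_profile_def bump_profile_deriv_def e_def by (simp add: algebra_simps)
  moreover have "\<bar>e 1 - 2 * e (5/2) + e 4\<bar> \<le> 4 * u\<^sup>2"
    using e[of 1] e[of "5/2"] e[of 4] by (simp add: abs_le_iff)
  ultimately show ?thesis by (simp add: abs_mult)
qed

lemma abs_bump_profile_deriv_le: "\<bar>bump_profile_deriv t\<bar> \<le> 2/3"
  unfolding bump_profile_deriv_def by (simp add: abs_le_iff max_def)

lemma bump_profile_eq_1: "t \<le> 1 \<Longrightarrow> bump_profile t = 1"
  by (simp add: bump_profile_def ramp_sq_def max_def)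

lemma bump_profile_eq_0: "t \<ge> 4 \<Longrightarrow> bump_profile t = 0"
  by (simp add: bump_profile_def ramp_sq_def max_def power2_eq_square field_simps)

lemma abs_bump_profile_second_diff_le:
  "\<bar>bump_profile (a + u) + bump_profile (a + u') - 2 * bump_profile a\<bar>
    \<le> 2/3 * \<bar>u + u'\<bar> + 8/9 * u\<^sup>2 + 8/9 * u'\<^sup>2"
proof -
  let ?X = "bump_profile_deriv a * (u + u')"
  let ?Y = "bump_profile (a + u) - bump_profile a - bump_profile_deriv a * u"
  let ?Z = "bump_profile (a + u') - bump_profile a - bump_profile_deriv a * u'"
  have "bump_profile (a + u) + bump_profile (a + u') - 2 * bump_profile a = ?X + ?Y + ?Z"
    by (simp add: algebra_simps)
  moreover have "\<bar>?X + ?Y + ?Z\<bar> \<le> \<bar>?X\<bar> + \<bar>?Y\<bar> + \<bar>?Z\<bar>"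
    using abs_triangle_ineq[of "?X + ?Y" ?Z] abs_triangle_ineq[of ?X ?Y] by linarith
  moreover have "\<bar>?X\<bar> \<le> 2/3 * \<bar>u + u'\<bar>"
    unfolding abs_mult by (rule mult_right_mono[OF abs_bump_profile_deriv_le abs_ge_zero])
  ultimately show ?thesis
    using bump_profile_taylor[of a u] bump_profile_taylor[of a u'] by linarith
qed

lemma abs_bump_profile_diff_le:
  "\<bar>bump_profile (a + u) - bump_profile (a + u')\<bar> \<le> 2/3 * \<bar>u - u'\<bar> + 8/9 * u\<^sup>2 + 8/9 * u'\<^sup>2"
proof -
  let ?X = "bump_profile_deriv a * (u - u')"
  let ?Y = "bump_profile (a + u) - bump_profile a - bump_profile_deriv a * u"
  let ?Z = "bump_profile (a + u') - bump_profile a - bump_profile_deriv a * u'"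
  have "bump_profile (a + u) - bump_profile (a + u') = ?X + ?Y - ?Z"
    by (simp add: algebra_simps)
  moreover have "\<bar>?X + ?Y - ?Z\<bar> \<le> \<bar>?X\<bar> + \<bar>?Y\<bar> + \<bar>?Z\<bar>"
    using abs_triangle_ineq4[of "?X + ?Y" ?Z] abs_triangle_ineq[of ?X ?Y] by linarith
  moreover have "\<bar>?X\<bar> \<le> 2/3 * \<bar>u - u'\<bar>"
    unfolding abs_mult by (rule mult_right_mono[OF abs_bump_profile_deriv_le abs_ge_zero])
  ultimately show ?thesis
    using bump_profile_taylor[of a u] bump_profile_taylor[of a u'] by linarith
qed

definition second_diff :: "((nat \<Rightarrow> int) \<Rightarrow> real) \<Rightarrow> (nat \<Rightarrow> int) \<Rightarrow> nat \<Rightarrow> real" where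
  "second_diff \<Phi> v i = \<Phi> (v(i := v i + 1)) + \<Phi> (v(i := v i + -1)) - 2 * \<Phi> v"

lemma lattice_lap_eq_second_diff:
  "d \<ge> 1 \<Longrightarrow> lattice_lap d \<Phi> v = - (\<Sum>i<d. second_diff \<Phi> v i) / (2 * real d)"
  unfolding lattice_lap_def second_diff_def by (simp add: sum_subtractf field_simps)

lemma abs_lattice_lap_le:
  assumes "d \<ge> 1" "\<And>i. i < d \<Longrightarrow> \<bar>second_diff \<Phi> v i\<bar> \<le> B"
  shows "\<bar>lattice_lap d \<Phi> v\<bar> \<le> B / 2"
proof -
  have "\<bar>\<Sum>i<d. second_diff \<Phi> v i\<bar> \<le> (\<Sum>i<d. \<bar>second_diff \<Phi> v i\<bar>)"
    by (rule sum_abs)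
  also have "\<dots> \<le> (\<Sum>i<d. B)" using assms(2) by (intro sum_mono) auto
  finally have "\<bar>\<Sum>i<d. second_diff \<Phi> v i\<bar> \<le> real d * B" by simp
  then show ?thesis using assms(1) by (simp add: lattice_lap_eq_second_diff abs_divide field_simps)
qed

lemma lattice_lap_eq_0:
  "d \<ge> 1 \<Longrightarrow> (\<And>i. i < d \<Longrightarrow> second_diff \<Phi> v i = 0) \<Longrightarrow> lattice_lap d \<Phi> v = 0"
  by (simp add: lattice_lap_eq_second_diff)

lemma sqnorm_step_bounds:
  assumes "i < d" "s = 1 \<or> s = -1"
  shows "sqnorm d (v(i := v i + s)) \<le> (sqrt (sqnorm d v) + 1)\<^sup>2"
    and "sqnorm d (v(i := v i + s)) \<ge> (sqrt (sqnorm d v) - 1)\<^sup>2"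
proof -
  have step: "sqnorm d (v(i := v i + s)) = sqnorm d v + 2 * real_of_int s * real_of_int (v i) + 1"
    using sqnorm_step[OF assms(1), of v s] assms(2) by auto
  have sq: "(sqrt (sqnorm d v))\<^sup>2 = sqnorm d v" using sqnorm_nonneg by simp
  have "\<bar>2 * real_of_int s * real_of_int (v i)\<bar> \<le> 2 * sqrt (sqnorm d v)"
    using assms(2) abs_coord_le_sqrt_sqnorm[OF assms(1)] by (auto simp: abs_mult)
  then show "sqnorm d (v(i := v i + s)) \<le> (sqrt (sqnorm d v) + 1)\<^sup>2"
    and "sqnorm d (v(i := v i + s)) \<ge> (sqrt (sqnorm d v) - 1)\<^sup>2"
    using step sq by (simp_all add: power2_eq_square algebra_simps abs_le_iff)
qed

definition bump :: "nat \<Rightarrow> real \<Rightarrow> (nat \<Rightarrow> int) \<Rightarrow> real" where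
  "bump d R v = bump_profile (sqnorm d v / R\<^sup>2)"

lemma bump_eq_1: "R > 0 \<Longrightarrow> sqnorm d v \<le> R\<^sup>2 \<Longrightarrow> bump d R v = 1"
  unfolding bump_def by (rule bump_profile_eq_1) (simp add: field_simps)

lemma bump_eq_0: "R > 0 \<Longrightarrow> sqnorm d v \<ge> (2 * R)\<^sup>2 \<Longrightarrow> bump d R v = 0"
  unfolding bump_def by (rule bump_profile_eq_0) (simp add: field_simps power2_eq_square)

lemma bump_step:
  assumes "i < d" "R > 0"
  shows "bump d R (v(i := v i + 1)) = bump_profile (sqnorm d v / R\<^sup>2 + (2 * real_of_int (v i) + 1) / R\<^sup>2)"
    and "bump d R (v(i := v i + -1)) = bump_profile (sqnorm d v / R\<^sup>2 + (1 - 2 * real_of_int (v i)) / R\<^sup>2)"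
proof -
  have "sqnorm d (v(i := v i + 1)) = sqnorm d v + (2 * real_of_int (v i) + 1)"
    and "sqnorm d (v(i := v i + -1)) = sqnorm d v + (1 - 2 * real_of_int (v i))"
    using sqnorm_step[OF assms(1), of v 1] sqnorm_step[OF assms(1), of v "-1"] by simp_all
  then show "bump d R (v(i := v i + 1)) = bump_profile (sqnorm d v / R\<^sup>2 + (2 * real_of_int (v i) + 1) / R\<^sup>2)"
    and "bump d R (v(i := v i + -1)) = bump_profile (sqnorm d v / R\<^sup>2 + (1 - 2 * real_of_int (v i)) / R\<^sup>2)"
    unfolding bump_def by (simp_all only: add_divide_distrib)
qed

lemma bump_eq_1_near:
  assumes "i < d" "s = 1 \<or> s = -1" "R > 0" "sqrt (sqnorm d v) \<le> R - 1"
  shows "bump d R (v(i := v i + s)) = 1" "bump d R v = 1"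
proof -
  have r: "0 \<le> sqrt (sqnorm d v)" using sqnorm_nonneg by simp
  have "(sqrt (sqnorm d v) + 1)\<^sup>2 \<le> R\<^sup>2" using assms(4) r by (intro power_mono) auto
  then show "bump d R (v(i := v i + s)) = 1"
    using sqnorm_step_bounds(1)[OF assms(1,2), of v] assms(3) by (intro bump_eq_1) auto
  have "(sqrt (sqnorm d v))\<^sup>2 \<le> R\<^sup>2" using assms(4) r by (intro power_mono) auto
  then show "bump d R v = 1" using sqnorm_nonneg[of d v] assms(3) by (intro bump_eq_1) auto
qed

lemma power2_step_div_le:
  fixes R p :: real
  assumes "R \<ge> 1/2" "\<bar>p\<bar> \<le> 2 * R + 1"
  shows "((2 * p + 1) / R\<^sup>2)\<^sup>2 \<le> 100 / R\<^sup>2" "((1 - 2 * p) / R\<^sup>2)\<^sup>2 \<le> 100 / R\<^sup>2"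
proof -
  have R: "R > 0" using assms by simp
  have "\<bar>2 * p + 1\<bar> \<le> 10 * R" "\<bar>1 - 2 * p\<bar> \<le> 10 * R" using assms by (auto simp: abs_le_iff)
  then have le: "(2 * p + 1)\<^sup>2 \<le> (10 * R)\<^sup>2" "(1 - 2 * p)\<^sup>2 \<le> (10 * R)\<^sup>2"
    using power_mono[of "\<bar>2 * p + 1\<bar>" "10 * R" 2] power_mono[of "\<bar>1 - 2 * p\<bar>" "10 * R" 2] by simp_all
  have eq: "(10 * R)\<^sup>2 / (R\<^sup>2)\<^sup>2 = 100 / R\<^sup>2" using R by (simp add: field_simps power2_eq_square)
  show "((2 * p + 1) / R\<^sup>2)\<^sup>2 \<le> 100 / R\<^sup>2" "((1 - 2 * p) / R\<^sup>2)\<^sup>2 \<le> 100 / R\<^sup>2"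
    using divide_right_mono[OF le(1), of "(R\<^sup>2)\<^sup>2"] divide_right_mono[OF le(2), of "(R\<^sup>2)\<^sup>2"] eq
    by (simp_all add: power_divide)
qed

lemma abs_second_diff_bump_le:
  assumes "i < d" "R \<ge> 1/2" "\<bar>real_of_int (v i)\<bar> \<le> 2 * R + 1"
  shows "\<bar>second_diff (bump d R) v i\<bar> \<le> 180 / R\<^sup>2"
proof -
  have R: "R > 0" using assms by simp
  define u where "u = (2 * real_of_int (v i) + 1) / R\<^sup>2"
  define u' where "u' = (1 - 2 * real_of_int (v i)) / R\<^sup>2"
  have "second_diff (bump d R) v i
      = bump_profile (sqnorm d v / R\<^sup>2 + u) + bump_profile (sqnorm d v / R\<^sup>2 + u')
        - 2 * bump_profile (sqnorm d v / R\<^sup>2)"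
    unfolding second_diff_def bump_step[OF assms(1) R] by (simp add: bump_def u_def u'_def)
  moreover have "u + u' = 2 / R\<^sup>2" by (simp add: u_def u'_def add_divide_distrib[symmetric])
  ultimately have "\<bar>second_diff (bump d R) v i\<bar> \<le> 2/3 * (2 / R\<^sup>2) + 8/9 * u\<^sup>2 + 8/9 * u'\<^sup>2"
    using abs_bump_profile_second_diff_le[of "sqnorm d v / R\<^sup>2" u u'] R by simp
  also have "\<dots> \<le> 2/3 * (2 / R\<^sup>2) + 8/9 * (100 / R\<^sup>2) + 8/9 * (100 / R\<^sup>2)"
    using power2_step_div_le[OF assms(2,3)] by (simp add: u_def u'_def)
  also have "\<dots> \<le> 180 / R\<^sup>2" using R by (simp add: field_simps)
  finally show ?thesis .
qed

lemma abs_bump_diff_le: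
  assumes "i < d" "R \<ge> 1/2" "\<bar>real_of_int (v i)\<bar> \<le> 2 * R + 1"
  shows "\<bar>bump d R (v(i := v i + 1)) - bump d R (v(i := v i + -1))\<bar> \<le> 370 / R"
proof -
  have R: "R > 0" using assms by simp
  define u where "u = (2 * real_of_int (v i) + 1) / R\<^sup>2"
  define u' where "u' = (1 - 2 * real_of_int (v i)) / R\<^sup>2"
  have "\<bar>u - u'\<bar> = 4 * \<bar>real_of_int (v i)\<bar> / R\<^sup>2"
    by (simp add: u_def u'_def diff_divide_distrib[symmetric] abs_divide abs_mult)
  also have "\<dots> \<le> 4 * (4 * R) / R\<^sup>2" using assms(2,3) by (intro divide_right_mono) auto
  finally have "\<bar>bump d R (v(i := v i + 1)) - bump d R (v(i := v i + -1))\<bar>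
      \<le> 2/3 * (4 * (4 * R) / R\<^sup>2) + 8/9 * u\<^sup>2 + 8/9 * u'\<^sup>2"
    using abs_bump_profile_diff_le[of "sqnorm d v / R\<^sup>2" u u']
    unfolding bump_step[OF assms(1) R] u_def u'_def by simp
  also have "\<dots> \<le> 2/3 * (4 * (4 * R) / R\<^sup>2) + 8/9 * (100 / R\<^sup>2) + 8/9 * (100 / R\<^sup>2)"
    using power2_step_div_le[OF assms(2,3)] by (simp add: u_def u'_def)
  also have "\<dots> = (32/3 + 1600/9 / R) / R" using R by (simp add: field_simps power2_eq_square)
  also have "\<dots> \<le> 370 / R" using assms(2) R by (simp add: divide_right_mono field_simps)
  finally show ?thesis .
qed

lemma scale_adapted_bump:
  assumes "d \<ge> 1" "R \<ge> 1/2"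
  shows "scale_adapted d R (90 / R\<^sup>2) (bump d R)"
proof -
  have R: "R > 0" using assms(2) by simp
  have "\<bar>lattice_lap d (bump d R) v\<bar> \<le> 90 / R\<^sup>2" if "sqrt (sqnorm d v) < 2 * R + 1" for v
    using abs_lattice_lap_le[OF assms(1), of "bump d R" v "180 / R\<^sup>2"]
      abs_second_diff_bump_le[OF _ assms(2)] abs_coord_le_sqrt_sqnorm[of _ d v] that
    by fastforce
  moreover have "lattice_lap d (bump d R) v = 0" if "sqrt (sqnorm d v) \<le> R - 1" for v
  proof (rule lattice_lap_eq_0[OF assms(1)])
    fix i assume i: "i < d"
    show "second_diff (bump d R) v i = 0"
      using bump_eq_1_near[OF i _ R that, of 1] bump_eq_1_near[OF i _ R that, of "-1"]
      unfolding second_diff_def by simp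
  qed
  ultimately show ?thesis using R by (auto simp: scale_adapted_def bump_eq_0)
qed

definition lin_form :: "nat \<Rightarrow> (nat \<Rightarrow> int) \<Rightarrow> (nat \<Rightarrow> int) \<Rightarrow> real" where
  "lin_form d y v = (\<Sum>j<d. real_of_int (y j) * real_of_int (v j))"

definition linear_bump :: "nat \<Rightarrow> real \<Rightarrow> (nat \<Rightarrow> int) \<Rightarrow> (nat \<Rightarrow> int) \<Rightarrow> real" where
  "linear_bump d R y v = lin_form d y v * bump d R v"

lemma lin_form_zero [simp]: "lin_form d y (\<lambda>i. 0) = 0"
  by (simp add: lin_form_def)

lemma lin_form_self: "lin_form d y y = sqnorm d y"
  by (simp add: lin_form_def sqnorm_def power2_eq_square)

lemma lin_form_step:
  assumes "i < d"
  shows "lin_form d y (v(i := v i + s)) = lin_form d y v + real_of_int (y i) * real_of_int s"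
proof -
  have "lin_form d y (v(i := t)) = real_of_int (y i) * real_of_int t
      + (\<Sum>j\<in>{..<d}-{i}. real_of_int (y j) * real_of_int (v j))" for t
    unfolding lin_form_def using assms by (simp add: sum.remove)
  from this[of "v i + s"] this[of "v i"] show ?thesis by (simp add: algebra_simps)
qed

lemma abs_lin_form_le:
  assumes "\<And>j. j < d \<Longrightarrow> \<bar>real_of_int (v j)\<bar> \<le> B"
  shows "\<bar>lin_form d y v\<bar> \<le> real d * sqrt (sqnorm d y) * B"
proof -
  have "\<bar>lin_form d y v\<bar> \<le> (\<Sum>j<d. \<bar>real_of_int (y j)\<bar> * \<bar>real_of_int (v j)\<bar>)"
    unfolding lin_form_def by (rule order.trans[OF sum_abs]) (simp add: abs_mult)
  also have "\<dots> \<le> (\<Sum>j<d. sqrt (sqnorm d y) * B)"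
    using abs_coord_le_sqrt_sqnorm assms sqnorm_nonneg by (intro sum_mono mult_mono) auto
  finally show ?thesis by simp
qed

lemma second_diff_linear_bump:
  assumes "i < d"
  shows "second_diff (linear_bump d R y) v i = lin_form d y v * second_diff (bump d R) v i +
     real_of_int (y i) * (bump d R (v(i := v i + 1)) - bump d R (v(i := v i + -1)))"
  unfolding second_diff_def linear_bump_def lin_form_step[OF assms] by (simp add: algebra_simps)

lemma abs_second_diff_linear_bump_le:
  assumes "i < d" "R \<ge> 1/2" "sqrt (sqnorm d v) < 2 * R + 1"
  shows "\<bar>second_diff (linear_bump d R y) v i\<bar> \<le> (720 * real d + 370) * sqrt (sqnorm d y) / R"
proof -
  have R: "R > 0" using assms by simp
  let ?r = "sqrt (sqnorm d y)"
  have "\<bar>real_of_int (v j)\<bar> \<le> 4 * R" if "j < d" for j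
    using abs_coord_le_sqrt_sqnorm[OF that, of v] assms by simp
  then have lin: "\<bar>lin_form d y v\<bar> \<le> real d * ?r * (4 * R)" by (rule abs_lin_form_le)
  have vi: "\<bar>real_of_int (v i)\<bar> \<le> 2 * R + 1"
    using abs_coord_le_sqrt_sqnorm[OF assms(1), of v] assms(3) by simp
  have "\<bar>second_diff (linear_bump d R y) v i\<bar>
      \<le> \<bar>lin_form d y v\<bar> * \<bar>second_diff (bump d R) v i\<bar>
        + \<bar>real_of_int (y i)\<bar> * \<bar>bump d R (v(i := v i + 1)) - bump d R (v(i := v i + -1))\<bar>"
    unfolding second_diff_linear_bump[OF assms(1)] by (metis abs_mult abs_triangle_ineq)
  also have "\<dots> \<le> (real d * ?r * (4 * R)) * (180 / R\<^sup>2) + ?r * (370 / R)"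
    using abs_second_diff_bump_le[of i d R v, OF assms(1,2) vi] abs_bump_diff_le[of i d R v, OF assms(1,2) vi]
      abs_coord_le_sqrt_sqnorm[OF assms(1), of y] lin
    by (intro add_mono mult_mono) (use R sqnorm_nonneg[of d y] in auto)
  also have "\<dots> = (720 * real d + 370) * ?r / R"
    using R by (simp add: field_simps power2_eq_square)
  finally show ?thesis .
qed

lemma scale_adapted_linear_bump:
  assumes "d \<ge> 1" "R \<ge> 1/2"
  shows "scale_adapted d R ((360 * real d + 185) * sqrt (sqnorm d y) / R) (linear_bump d R y)"
proof -
  have R: "R > 0" using assms(2) by simp
  have "\<bar>lattice_lap d (linear_bump d R y) v\<bar> \<le> (360 * real d + 185) * sqrt (sqnorm d y) / R"
    if "sqrt (sqnorm d v) < 2 * R + 1" for v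
  proof -
    have "\<bar>lattice_lap d (linear_bump d R y) v\<bar> \<le> (720 * real d + 370) * sqrt (sqnorm d y) / R / 2"
      by (rule abs_lattice_lap_le[OF assms(1)]) (rule abs_second_diff_linear_bump_le[OF _ assms(2) that])
    moreover have "(720 * real d + 370) * sqrt (sqnorm d y) / R / 2 = (360 * real d + 185) * sqrt (sqnorm d y) / R"
      using R by (simp add: field_simps)
    ultimately show ?thesis by simp
  qed
  moreover have "lattice_lap d (linear_bump d R y) v = 0" if "sqrt (sqnorm d v) \<le> R - 1" for v
  proof (rule lattice_lap_eq_0[OF assms(1)])
    fix i assume i: "i < d"
    show "second_diff (linear_bump d R y) v i = 0"
      using bump_eq_1_near[OF i _ R that, of 1] bump_eq_1_near[OF i _ R that, of "-1"]
      unfolding second_diff_linear_bump[OF i] by (simp add: second_diff_def)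
  qed
  ultimately show ?thesis using R by (auto simp: scale_adapted_def linear_bump_def bump_eq_0)
qed

section \<open>The lower bounds in each dimension\<close>

lemma torus_norm_ge_1:
  assumes "x \<in> torus n d" "x \<noteq> torus_zero" "n \<ge> 1"
  shows "torus_norm n d x \<ge> 1"
proof -
  obtain i where xi: "x i \<noteq> 0" using assms(2) by (auto simp: torus_zero_def)
  have i: "i < d" using xi assms(1) by (cases "i < d") (auto simp: torus_def)
  have "0 \<le> x i" "x i < int n" using i assms(1) by (auto simp: torus_def)
  then have "centred_coords n x i \<noteq> 0"
    using centred_rep_bounds(3)[of "x i" n] xi by (auto simp: centred_coords_def)
  then have "1 \<le> \<bar>centred_coords n x i\<bar>" by (cases "centred_coords n x i > 0") auto
  then have "1 \<le> \<bar>real_of_int (centred_coords n x i)\<bar>" by (metis of_int_1_le_iff of_int_abs)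
  then have "1 \<le> (real_of_int (centred_coords n x i))\<^sup>2" using one_le_power[of _ 2] by fastforce
  also have "\<dots> \<le> sqnorm d (centred_coords n x)" by (rule coord_power2_le_sqnorm[OF i])
  finally show ?thesis by (simp add: torus_norm_eq_sqrt_sqnorm)
qed

lemma ex_power_bracket:
  fixes y :: real
  assumes "y \<ge> 1" "b \<ge> 2"
  obtains m where "real b ^ m \<le> y" "y < real b ^ (m + 1)"
proof -
  have y: "nat \<lfloor>y\<rfloor> \<ge> 1" "real (nat \<lfloor>y\<rfloor>) \<le> y" "y < real (nat \<lfloor>y\<rfloor>) + 1"
    using assms(1) by linarith+
  obtain m where m: "b ^ m \<le> nat \<lfloor>y\<rfloor>" "nat \<lfloor>y\<rfloor> + 1 \<le> b ^ (m + 1)"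
    using ex_power_ivl1[OF assms(2) y(1)] by auto
  have "real (b ^ m) \<le> real (nat \<lfloor>y\<rfloor>)" "real (nat \<lfloor>y\<rfloor>) + 1 \<le> real (b ^ (m + 1))"
    using m of_nat_le_iff[of "nat \<lfloor>y\<rfloor> + 1" "b ^ (m + 1)", where 'a = real] by simp_all
  then have "real (b ^ m) \<le> y" "y < real (b ^ (m + 1))" using y(2,3) by linarith+
  then show ?thesis using that by simp
qed

lemma ln_le_of_le_power_2:
  fixes y :: real
  assumes "0 < y" "y \<le> 2 ^ k"
  shows "ln y \<le> real k"
proof -
  have "ln y \<le> ln (2 ^ k)" using assms by (rule ln_mono[rotated])
  also have "\<dots> = real k * ln 2" by (rule ln_realpow)
  also have "\<dots> \<le> real k" using ln_2_less_1 by (simp add: mult_left_le)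
  finally show ?thesis .
qed

lemma geometric_scales_separated:
  fixes R0 :: real
  assumes "R0 \<ge> 1/2" "j < k"
  shows "2 * (8 ^ j * R0) + 1 \<le> 8 ^ k * R0 - 1"
proof -
  have "8 * 8 ^ j \<le> (8::real) ^ k" using power_increasing[of "Suc j" k "8::real"] assms(2) by simp
  then have "8 * (8 ^ j * R0) \<le> 8 ^ k * R0" using assms(1) by (simp add: mult_right_mono)
  moreover have "1/2 \<le> 8 ^ j * R0" using mult_mono[of 1 "8 ^ j" "1/2" R0] assms(1) by simp
  ultimately show ?thesis by linarith
qed

text \<open>If all scales contribute the same increment \<open>a\<close> and the same energy bound \<open>B\<close>, the
  increments add coherently while the energies add, which gains a factor \<open>J\<close>.\<close>

lemma eta_incr_var_multiscale_uniform:
  fixes \<Phi> :: "nat \<Rightarrow> (nat \<Rightarrow> int) \<Rightarrow> real" and R b :: "nat \<Rightarrow> real"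
  assumes "n \<ge> 1" "d \<ge> 1" "x \<in> torus n d" "x \<noteq> torus_zero" "J \<ge> 1"
    and "\<And>j. j < J \<Longrightarrow> scale_adapted d (R j) (b j) (\<Phi> j)"
    and "\<And>j. j < J \<Longrightarrow> 4 * R j + 4 < real n"
    and "\<And>j k. j < k \<Longrightarrow> k < J \<Longrightarrow> 2 * R j + 1 \<le> R k - 1"
    and increment: "\<And>j. j < J \<Longrightarrow> \<Phi> j (\<lambda>i. 0) - \<Phi> j (centred_coords n x) = a"
    and energy: "\<And>j. j < J \<Longrightarrow> (4 * R j + 3) ^ d * (b j)\<^sup>2 \<le> B"
  shows "real J * a\<^sup>2 \<le> (2 * real d)\<^sup>2 * eta_incr_var n d torus_zero x * B"
proof -
  let ?V = "eta_incr_var n d torus_zero x"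
  have "(\<Sum>j<J. \<Phi> j (\<lambda>i. 0)) - (\<Sum>j<J. \<Phi> j (centred_coords n x)) = real J * a"
    using increment by (simp add: sum_subtractf[symmetric])
  then have "(real J * a)\<^sup>2 \<le> (2 * real d)\<^sup>2 * ?V * (\<Sum>j<J. (4 * R j + 3) ^ d * (b j)\<^sup>2)"
    using eta_incr_var_multiscale_bound[where J = J and R = R and b = b and \<Phi> = \<Phi>, OF assms(1-4,6-8)]
    by simp
  also have "\<dots> \<le> (2 * real d)\<^sup>2 * ?V * (real J * B)"
    using energy sum_mono[of "{..<J}" "\<lambda>j. (4 * R j + 3) ^ d * (b j)\<^sup>2" "\<lambda>_. B"] eta_incr_var_nonneg
    by (intro mult_left_mono) auto
  finally have "real J * (real J * a\<^sup>2) \<le> real J * ((2 * real d)\<^sup>2 * ?V * B)"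
    by (simp add: power2_eq_square mult_ac)
  then show ?thesis using assms(5) by simp
qed

lemma eta_incr_var_ge_const:
  assumes "d \<ge> 1" "real n \<ge> 64" "x \<in> torus n d" "x \<noteq> torus_zero"
  shows "eta_incr_var n d torus_zero x \<ge> 1 / ((2 * real d)\<^sup>2 * (5 ^ d * 129600))"
proof -
  have n: "n \<ge> 1" using assms(2) by simp
  have "bump d (1/2) (centred_coords n x) = 0"
    using torus_norm_ge_1[OF assms(3,4) n] by (intro bump_eq_0) (auto simp: sqnorm_centred_coords)
  then have "1 \<le> (2 * real d)\<^sup>2 * eta_incr_var n d torus_zero x * ((4 * (1/2) + 3) ^ d * (90 / (1/2)\<^sup>2)\<^sup>2)"
    using eta_incr_var_single_scale_bound[OF n assms(1,3,4) scale_adapted_bump[OF assms(1), of "1/2"]] assms(2)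
    by (simp add: bump_eq_1)
  then show ?thesis using assms(1) by (simp add: field_simps)
qed

lemma eta_incr_var_ge_dim3:
  assumes "real n \<ge> 64" "x \<in> torus n 3" "x \<noteq> torus_zero" "torus_norm n 3 x < real n / 64"
  shows "eta_incr_var n 3 torus_zero x \<ge> torus_norm n 3 x / (36 * (125 * 129600))"
proof -
  have n: "n \<ge> 1" using assms(1) by simp
  define r where "r = torus_norm n 3 x"
  have r: "r \<ge> 1" unfolding r_def by (rule torus_norm_ge_1[OF assms(2,3) n])
  let ?V = "eta_incr_var n 3 torus_zero x"
  have "bump 3 (r/2) (centred_coords n x) = 0"
    using r by (intro bump_eq_0) (auto simp: sqnorm_centred_coords r_def)
  then have "1 \<le> 36 * ?V * ((4 * (r/2) + 3) ^ 3 * (90 / (r/2)\<^sup>2)\<^sup>2)"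
    using eta_incr_var_single_scale_bound[OF n _ assms(2,3) scale_adapted_bump[of 3 "r/2"]] r assms(1,4)
    by (simp add: bump_eq_1 r_def)
  also have "\<dots> \<le> 36 * ?V * (125 * 129600 / r)"
  proof (intro mult_left_mono)
    have "(4 * (r/2) + 3) ^ 3 \<le> (5 * r) ^ 3" using r by (intro power_mono) auto
    then have "(4 * (r/2) + 3) ^ 3 * (90 / (r/2)\<^sup>2)\<^sup>2 \<le> (5 * r) ^ 3 * (90 / (r/2)\<^sup>2)\<^sup>2"
      by (intro mult_right_mono) auto
    also have "\<dots> = 125 * 129600 / r" using r by (simp add: field_simps power2_eq_square power3_eq_cube)
    finally show "(4 * (r/2) + 3) ^ 3 * (90 / (r/2)\<^sup>2)\<^sup>2 \<le> 125 * 129600 / r" .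
  qed (use eta_incr_var_nonneg in simp)
  finally show ?thesis using r unfolding r_def[symmetric] by (simp add: field_simps)
qed

lemma eta_incr_var_dim4_scales:
  assumes "real n \<ge> 64" "x \<in> torus n 4" "x \<noteq> torus_zero" "torus_norm n 4 x < real n / 64"
    and "8 ^ m \<le> torus_norm n 4 x"
  shows "real (m + 1) \<le> 64 * eta_incr_var n 4 torus_zero x * 81000000"
proof -
  have n: "n \<ge> 1" using assms(1) by simp
  define R where "R j = 8 ^ j * (1/2 :: real)" for j
  have R: "R j \<ge> 1/2" for j unfolding R_def by simp
  have Rx: "2 * R j \<le> torus_norm n 4 x" if "j < m + 1" for j
  proof -
    have "(8::real) ^ j \<le> 8 ^ m" using that by (intro power_increasing) auto
    then show ?thesis using assms(5) unfolding R_def by linarith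
  qed
  have "real (m + 1) * 1\<^sup>2 \<le> (2 * real 4)\<^sup>2 * eta_incr_var n 4 torus_zero x * 81000000"
  proof (rule eta_incr_var_multiscale_uniform[OF n _ assms(2,3), of "m + 1" R "\<lambda>j. 90 / (R j)\<^sup>2" "\<lambda>j. bump 4 (R j)"])
    fix j assume j: "j < m + 1"
    show "4 * R j + 4 < real n" using Rx[OF j] assms(1,4) by linarith
    show "bump 4 (R j) (\<lambda>i. 0) - bump 4 (R j) (centred_coords n x) = 1"
      using R[of j] Rx[OF j] power_mono[of "2 * R j" "torus_norm n 4 x" 2]
      by (simp add: bump_eq_1 bump_eq_0 sqnorm_centred_coords)
    have "(4 * R j + 3) ^ 4 \<le> (10 * R j) ^ 4" using R[of j] by (intro power_mono) auto
    then have "(4 * R j + 3) ^ 4 * (90 / (R j)\<^sup>2)\<^sup>2 \<le> (10 * R j) ^ 4 * (90 / (R j)\<^sup>2)\<^sup>2"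
      by (intro mult_right_mono) auto
    also have "\<dots> = 81000000" using R[of j] by (simp add: field_simps power2_eq_square power4_eq_xxxx)
    finally show "(4 * R j + 3) ^ 4 * (90 / (R j)\<^sup>2)\<^sup>2 \<le> 81000000" .
  next
    fix j k :: nat assume "j < k"
    then show "2 * R j + 1 \<le> R k - 1" unfolding R_def by (rule geometric_scales_separated[rotated]) simp
  qed (use scale_adapted_bump R in auto)
  then show ?thesis by simp
qed

lemma eta_incr_var_ge_dim4:
  assumes "real n \<ge> 64" "x \<in> torus n 4" "x \<noteq> torus_zero" "torus_norm n 4 x < real n / 64"
  shows "eta_incr_var n 4 torus_zero x \<ge> ln (1 + torus_norm n 4 x) / (4 * (64 * 81000000))"
proof -
  have n: "n \<ge> 1" using assms(1) by simp
  define r where "r = torus_norm n 4 x"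
  have r: "r \<ge> 1" unfolding r_def by (rule torus_norm_ge_1[OF assms(2,3) n])
  obtain m where m: "8 ^ m \<le> r" "r < 8 ^ (m + 1)" using ex_power_bracket[OF r, of 8] by auto
  have "real (m + 1) \<le> 64 * eta_incr_var n 4 torus_zero x * 81000000"
    using eta_incr_var_dim4_scales[OF assms m(1)[unfolded r_def]] .
  moreover have "ln (1 + r) \<le> 4 * real (m + 1)"
  proof -
    have "1 + r \<le> 2 * 8 ^ (m + 1)" using m(2) one_le_power[of "8::real" "m + 1"] by simp
    also have "\<dots> = 2 ^ (3 * (m + 1) + 1)" by (simp add: power_add power_mult)
    finally have "ln (1 + r) \<le> real (3 * (m + 1) + 1)" using r by (intro ln_le_of_le_power_2) auto
    then show ?thesis by simp
  qed
  ultimately show ?thesis unfolding r_def by (simp add: field_simps)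
qed

lemma eta_incr_var_ge_dim1:
  assumes "real n \<ge> 64" "x \<in> torus n 1" "x \<noteq> torus_zero" "torus_norm n 1 x < real n / 64"
  shows "eta_incr_var n 1 torus_zero x \<ge> real n * (torus_norm n 1 x)\<^sup>2 / (4 * (80 * 545\<^sup>2))"
proof -
  have n: "n \<ge> 1" using assms(1) by simp
  define r where "r = torus_norm n 1 x"
  define R where "R = real n / 8"
  have r: "r \<ge> 1" unfolding r_def by (rule torus_norm_ge_1[OF assms(2,3) n])
  have R: "R \<ge> 8" "r \<le> R" using assms(1,4) by (simp_all add: R_def r_def)
  let ?y = "centred_coords n x"
  let ?V = "eta_incr_var n 1 torus_zero x"
  have y: "sqnorm 1 ?y = r\<^sup>2" "sqrt (sqnorm 1 ?y) = r"
    by (simp add: sqnorm_centred_coords r_def, simp add: torus_norm_eq_sqrt_sqnorm r_def)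
  have small: "4 * R + 4 < real n" using assms(1) by (simp add: R_def)
  have "bump 1 R ?y = 1" using R r y(1) power_mono[of r R 2] by (intro bump_eq_1) auto
  then have "linear_bump 1 R ?y (\<lambda>i. 0) - linear_bump 1 R ?y ?y = - r\<^sup>2"
    using y by (simp add: linear_bump_def lin_form_self)
  then have "(r\<^sup>2)\<^sup>2 \<le> 4 * ?V * ((4 * R + 3) * (545 * r / R)\<^sup>2)"
    using eta_incr_var_single_scale_bound[OF n _ assms(2,3) scale_adapted_linear_bump[of 1 R ?y] small] R y
    by simp
  also have "\<dots> \<le> 4 * ?V * (80 * 545\<^sup>2 * r\<^sup>2 / real n)"
  proof (intro mult_left_mono)
    have "(4 * R + 3) * (545 * r / R)\<^sup>2 \<le> (10 * R) * (545 * r / R)\<^sup>2"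
      using R by (intro mult_right_mono) auto
    also have "\<dots> = 80 * 545\<^sup>2 * r\<^sup>2 / real n" using R unfolding R_def by (simp add: field_simps power2_eq_square)
    finally show "(4 * R + 3) * (545 * r / R)\<^sup>2 \<le> 80 * 545\<^sup>2 * r\<^sup>2 / real n" .
  qed (use eta_incr_var_nonneg in simp)
  finally have "r\<^sup>2 * r\<^sup>2 \<le> r\<^sup>2 * (4 * ?V * 80 * 545\<^sup>2 / real n)"
    by (simp add: power2_eq_square mult_ac)
  then have "r\<^sup>2 \<le> 4 * ?V * 80 * 545\<^sup>2 / real n" by (rule mult_left_le_imp_le) (use r in simp)
  then show ?thesis using assms(1) unfolding r_def[symmetric] by (simp add: field_simps)
qed

lemma eta_incr_var_dim2_scales:
  assumes "real n \<ge> 64" "x \<in> torus n 2" "x \<noteq> torus_zero"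
    and "8 ^ m \<le> real n / (16 * torus_norm n 2 x)"
  shows "real (m + 1) * (torus_norm n 2 x)\<^sup>2 \<le> 16 * eta_incr_var n 2 torus_zero x * (100 * 905\<^sup>2)"
proof -
  have n: "n \<ge> 1" using assms(1) by simp
  define r where "r = torus_norm n 2 x"
  have r: "r \<ge> 1" unfolding r_def by (rule torus_norm_ge_1[OF assms(2,3) n])
  let ?y = "centred_coords n x"
  have y: "sqnorm 2 ?y = r\<^sup>2" "sqrt (sqnorm 2 ?y) = r"
    by (simp add: sqnorm_centred_coords r_def, simp add: torus_norm_eq_sqrt_sqnorm r_def)
  define R where "R j = 8 ^ j * r" for j
  have Rr: "r \<le> R j" for j unfolding R_def using r by simp
  have Rn: "R j \<le> real n / 16" if "j < m + 1" for j
  proof -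
    have "(8::real) ^ j \<le> 8 ^ m" using that by (intro power_increasing) auto
    then have "R j \<le> 8 ^ m * r" unfolding R_def using r by (intro mult_right_mono) auto
    also have "\<dots> \<le> real n / 16" using assms(4)[folded r_def] r by (simp add: field_simps)
    finally show ?thesis .
  qed
  have "real (m + 1) * (- r\<^sup>2)\<^sup>2 \<le> (2 * real 2)\<^sup>2 * eta_incr_var n 2 torus_zero x * (100 * 905\<^sup>2 * r\<^sup>2)"
  proof (rule eta_incr_var_multiscale_uniform[OF n _ assms(2,3), of "m + 1" R "\<lambda>j. 905 * r / R j"
        "\<lambda>j. linear_bump 2 (R j) ?y"])
    fix j assume j: "j < m + 1"
    show "scale_adapted 2 (R j) (905 * r / R j) (linear_bump 2 (R j) ?y)"
      using scale_adapted_linear_bump[of 2 "R j" ?y] Rr[of j] r y by simp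
    show "4 * R j + 4 < real n" using Rn[OF j] assms(1) by linarith
    have "bump 2 (R j) ?y = 1" using Rr[of j] r y(1) power_mono[of r "R j" 2] by (intro bump_eq_1) auto
    then show "linear_bump 2 (R j) ?y (\<lambda>i. 0) - linear_bump 2 (R j) ?y ?y = - r\<^sup>2"
      by (simp add: linear_bump_def lin_form_self y)
    have "(4 * R j + 3)\<^sup>2 \<le> (10 * R j)\<^sup>2" using Rr[of j] r by (intro power_mono) auto
    then have "(4 * R j + 3) ^ 2 * (905 * r / R j)\<^sup>2 \<le> (10 * R j)\<^sup>2 * (905 * r / R j)\<^sup>2"
      by (intro mult_right_mono) auto
    also have "\<dots> = 100 * 905\<^sup>2 * r\<^sup>2" using Rr[of j] r by (simp add: field_simps power2_eq_square)
    finally show "(4 * R j + 3) ^ 2 * (905 * r / R j)\<^sup>2 \<le> 100 * 905\<^sup>2 * r\<^sup>2" .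
  next
    fix j k :: nat assume "j < k"
    then show "2 * R j + 1 \<le> R k - 1" unfolding R_def by (rule geometric_scales_separated[rotated]) (use r in simp)
  qed simp_all
  then have "r\<^sup>2 * (real (m + 1) * r\<^sup>2) \<le> r\<^sup>2 * (16 * eta_incr_var n 2 torus_zero x * (100 * 905\<^sup>2))"
    by (simp add: power2_eq_square mult_ac)
  then show ?thesis
    unfolding r_def[symmetric] by (rule mult_left_le_imp_le) (use r in simp)
qed

lemma eta_incr_var_ge_dim2:
  assumes "real n \<ge> 64" "x \<in> torus n 2" "x \<noteq> torus_zero" "torus_norm n 2 x < real n / 64"
  shows "eta_incr_var n 2 torus_zero x
    \<ge> (torus_norm n 2 x)\<^sup>2 * ln (real n / torus_norm n 2 x) / (7 * (16 * (100 * 905\<^sup>2)))"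
proof -
  have n: "n \<ge> 1" using assms(1) by simp
  define r where "r = torus_norm n 2 x"
  have r: "r \<ge> 1" unfolding r_def by (rule torus_norm_ge_1[OF assms(2,3) n])
  have "real n / (16 * r) \<ge> 1" using assms(4) r unfolding r_def by (simp add: field_simps)
  then obtain m where m: "8 ^ m \<le> real n / (16 * r)" "real n / (16 * r) < 8 ^ (m + 1)"
    using ex_power_bracket[of _ 8] by auto
  have scales: "real (m + 1) * r\<^sup>2 \<le> 16 * eta_incr_var n 2 torus_zero x * (100 * 905\<^sup>2)"
    using eta_incr_var_dim2_scales[OF assms(1-3) m(1)[unfolded r_def]] unfolding r_def .
  have "ln (real n / r) \<le> 7 * real (m + 1)"
  proof -
    have "real n / r \<le> 16 * 8 ^ (m + 1)" using m(2) r by (simp add: field_simps)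
    also have "\<dots> = 2 ^ (3 * (m + 1) + 4)" by (simp add: power_add power_mult)
    finally have "ln (real n / r) \<le> real (3 * (m + 1) + 4)" using r assms(1) by (intro ln_le_of_le_power_2) auto
    then show ?thesis by simp
  qed
  then have "r\<^sup>2 * ln (real n / r) \<le> 7 * (real (m + 1) * r\<^sup>2)"
    using mult_left_mono[of "ln (real n / r)" "7 * real (m + 1)" "r\<^sup>2"] by (simp add: algebra_simps)
  also have "\<dots> \<le> 7 * (16 * eta_incr_var n 2 torus_zero x * (100 * 905\<^sup>2))"
    using scales by simp
  finally show ?thesis unfolding r_def by (simp add: field_simps)
qed

lemma eta_incr_var_lower_bound:
  assumes "d \<ge> 1"
  obtains c :: real where "c > 0" and "\<And>n x. real n \<ge> 64 \<Longrightarrow> x \<in> torus n d \<Longrightarrow> x \<noteq> torus_zero \<Longrightarrow>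
     torus_norm n d x < real n / 64 \<Longrightarrow> eta_incr_var n d torus_zero x \<ge> c * psi d (real n) (torus_norm n d x)"
proof -
  consider "d = 1" | "d = 2" | "d = 3" | "d = 4" | "d \<ge> 5" using assms by linarith
  then show ?thesis
  proof cases
    case 1
    then show ?thesis using that[of "1 / (4 * (80 * 545\<^sup>2))"] eta_incr_var_ge_dim1 by (auto simp: psi_def)
  next
    case 2
    then show ?thesis using that[of "1 / (7 * (16 * (100 * 905\<^sup>2)))"] eta_incr_var_ge_dim2 by (auto simp: psi_def)
  next
    case 3
    then show ?thesis using that[of "1 / (36 * (125 * 129600))"] eta_incr_var_ge_dim3 by (auto simp: psi_def)
  next
    case 4
    then show ?thesis using that[of "1 / (4 * (64 * 81000000))"] eta_incr_var_ge_dim4 by (auto simp: psi_def)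
  next
    case 5
    then show ?thesis
      using that[of "1 / ((2 * real d)\<^sup>2 * (5 ^ d * 129600))"] eta_incr_var_ge_const[OF assms]
      by (auto simp: psi_def)
  qed
qed

theorem proposition8p12:
  fixes d :: nat
  assumes "d \<ge> 1"
  shows "\<exists>\<delta> N c :: real. \<delta> > 0 \<and> N > 0 \<and> c > 0 \<and>
    (\<forall>n::nat. real n \<ge> N \<longrightarrow>
      (\<forall>x\<in>torus n d. x \<noteq> torus_zero \<longrightarrow> torus_norm n d x < \<delta> * real n \<longrightarrow>
         eta_incr_var n d torus_zero x \<ge> c * psi d (real n) (torus_norm n d x)))"
proof -
  obtain c :: real where "c > 0" and "\<And>n x. real n \<ge> 64 \<Longrightarrow> x \<in> torus n d \<Longrightarrow> x \<noteq> torus_zero \<Longrightarrow>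
      torus_norm n d x < real n / 64 \<Longrightarrow> eta_incr_var n d torus_zero x \<ge> c * psi d (real n) (torus_norm n d x)"
    using eta_incr_var_lower_bound[OF assms] by blast
  then show ?thesis by (intro exI[of _ "1/64"] exI[of _ 64] exI[of _ c]) auto
qed

end
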